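(* Let $k$ be a commutative ring, $n\geq 3$ and $m\geq 3$, and let $D_m$ be the dg-category defined below. For all $1\leq i,j\leq m$ there are isomorphisms of graded $k$-modules \[ H_\ast\operatorname{Hom}_{D_m}(z_i,z_j)\cong\begin{cases} k[t_{n-2}] & j=i,\\ k[t_{n-2}] & j=i+1,\ 1\le i\le m-1,\\ k[t_{n-2}][n-m] & i=m,\ j=1,\\ 0 & \text{otherwise},\end{cases}\] where $k[t_{n-2}]$ denotes the polynomial ring on a generator of degree $n-2$ (as a graded $k$-module) and $[s]$ shifts degrees up by $s$.
   Context: $D_m$ is the $k$-linear dg-category with objects $z_1,\dots,z_m$ whose morphisms are freely generated (as a graded $k$-linear category) by morphisms $b_{i,j}:z_i\to z_j$ for all $i\neq j$, of degree $j-i-1$ if $j>i$ and of degree $n+j-i-1$ if $j<i$, with differential determined on generators by \[ d(b_{i,j})=\begin{cases} \sum_{i<k<j}(-1)^{j-k+1}b_{k,j}b_{i,k} & j>i,\\ \sum_{i<k\le m}(-1)^{j-k+n+1}b_{k,j}b_{i,k}+\sum_{1\le k<j}(-1)^{j-k+1}b_{k,j}b_{i,k} & j<i,\end{cases}\] where $b_{k,j}b_{i,k}$ denotes the composite $z_i\to z_k\to z_j$. Homological grading is used. *)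

theory Defs
  imports Main
begin

text \<open>Objects are z_1..z_m, encoded by 1..m.
  A generator b_{a,b} : z_a -> z_b is encoded by the pair (a,b).
  A path (composable word in generators) is a list [f_1,...,f_r] standing for the
  composite f_r o ... o f_1 (f_1 applied first); the empty list is the identity.
  Hom_{D_m}(z_i,z_j) is the free k-module on the paths from z_i to z_j.\<close>

type_synonym path = "(nat \<times> nat) list"

definition is_path :: "nat \<Rightarrow> nat \<Rightarrow> nat \<Rightarrow> path \<Rightarrow> bool" where
  "is_path m i j p \<longleftrightarrow>
     (p = [] \<and> i = j) \<or>
     (p \<noteq> [] \<and> fst (hd p) = i \<and> snd (last p) = j \<and>
      (\<forall>t < length p. fst (p ! t) \<noteq> snd (p ! t) \<and>
          fst (p ! t) \<in> {1..m} \<and> snd (p ! t) \<in> {1..m}) \<and>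
      (\<forall>t. Suc t < length p \<longrightarrow> snd (p ! t) = fst (p ! Suc t)))"

definition gdeg :: "nat \<Rightarrow> nat \<times> nat \<Rightarrow> int" where
  "gdeg n g = (if fst g < snd g then int (snd g) - int (fst g) - 1
               else int n + int (snd g) - int (fst g) - 1)"

definition pdeg :: "nat \<Rightarrow> path \<Rightarrow> int" where
  "pdeg n p = sum_list (map (gdeg n) p)"

definition sgn1 :: "int \<Rightarrow> 'k::comm_ring_1" where
  "sgn1 e = (if even e then 1 else - 1)"

text \<open>Coefficient of the length-2 path q in d(b_{a,b}); note that b_{c,b} b_{a,c} is
  the path [(a,c),(c,b)].\<close>
definition dgen :: "nat \<Rightarrow> nat \<Rightarrow> nat \<times> nat \<Rightarrow> path \<Rightarrow> 'k::comm_ring_1" where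
  "dgen n m g q =
     (let a = fst g; b = snd g in
      if a < b then
        (\<Sum>c\<in>{a<..<b}. if q = [(a,c),(c,b)] then sgn1 (int b - int c + 1) else 0)
      else
        (\<Sum>c\<in>{a<..m}. if q = [(a,c),(c,b)] then sgn1 (int b - int c + int n + 1) else 0)
        + (\<Sum>c\<in>{1..<b}. if q = [(a,c),(c,b)] then sgn1 (int b - int c + 1) else 0))"

text \<open>Differential of a path p, extended by the Leibniz rule
  d(g o f) = d(g) o f + (-1)^{|g|} g o d(f): coefficient of the path q in d(p).\<close>
definition dpath :: "nat \<Rightarrow> nat \<Rightarrow> path \<Rightarrow> path \<Rightarrow> 'k::comm_ring_1" where
  "dpath n m p q =
     (\<Sum>t<length p. sgn1 (pdeg n (drop (Suc t) p)) *
        (if length q = Suc (length p) \<and> take t q = take t p \<and>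
            drop (Suc (Suc t)) q = drop (Suc t) p
         then dgen n m (p ! t) [q ! t, q ! Suc t] else 0))"

definition chains :: "nat \<Rightarrow> nat \<Rightarrow> nat \<Rightarrow> nat \<Rightarrow> int \<Rightarrow> (path \<Rightarrow> 'k::comm_ring_1) set" where
  "chains n m i j d = {c. finite {p. c p \<noteq> 0} \<and>
       (\<forall>p. c p \<noteq> 0 \<longrightarrow> is_path m i j p \<and> pdeg n p = d)}"

definition dch :: "nat \<Rightarrow> nat \<Rightarrow> (path \<Rightarrow> 'k::comm_ring_1) \<Rightarrow> path \<Rightarrow> 'k" where
  "dch n m c q = (\<Sum>p\<in>{p. c p \<noteq> 0}. c p * dpath n m p q)"

definition cycles :: "nat \<Rightarrow> nat \<Rightarrow> nat \<Rightarrow> nat \<Rightarrow> int \<Rightarrow> (path \<Rightarrow> 'k::comm_ring_1) set" where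
  "cycles n m i j d = {c \<in> chains n m i j d. \<forall>q. dch n m c q = 0}"

definition boundaries :: "nat \<Rightarrow> nat \<Rightarrow> nat \<Rightarrow> nat \<Rightarrow> int \<Rightarrow> (path \<Rightarrow> 'k::comm_ring_1) set" where
  "boundaries n m i j d = dch n m ` chains n m i j (d + 1)"

definition coset :: "(path \<Rightarrow> 'k::comm_ring_1) set \<Rightarrow> (path \<Rightarrow> 'k) \<Rightarrow> (path \<Rightarrow> 'k) set" where
  "coset B c = {(\<lambda>q. c q + b q) | b. b \<in> B}"

definition homology :: "nat \<Rightarrow> nat \<Rightarrow> nat \<Rightarrow> nat \<Rightarrow> int \<Rightarrow> (path \<Rightarrow> 'k::comm_ring_1) set set" where
  "homology n m i j d = coset (boundaries n m i j d) ` cycles n m i j d"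

definition homology_iso :: "nat \<Rightarrow> nat \<Rightarrow> nat \<Rightarrow> nat \<Rightarrow> int \<Rightarrow> 'k::comm_ring_1 set \<Rightarrow> bool" where
  "homology_iso n m i j d M \<longleftrightarrow>
     (\<exists>\<psi>. bij_betw \<psi> (homology n m i j d) M \<and>
        (\<forall>c\<in>cycles n m i j d. \<forall>c'\<in>cycles n m i j d.
           \<psi> (coset (boundaries n m i j d) (\<lambda>q. c q + c' q)) =
           \<psi> (coset (boundaries n m i j d) c) + \<psi> (coset (boundaries n m i j d) c')) \<and>
        (\<forall>a. \<forall>c\<in>cycles n m i j d.
           \<psi> (coset (boundaries n m i j d) (\<lambda>q. a * c q)) = a * \<psi> (coset (boundaries n m i j d) c)))"

text \<open>Degree-d part of k[t_e] (t of degree e): k if d = p*e for some p >= 0, else 0.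
  The shift M[s] has (M[s])_d = M_{d-s}.\<close>
definition polyk :: "int \<Rightarrow> int \<Rightarrow> 'k::comm_ring_1 set" where
  "polyk e d = (if \<exists>p::nat. d = int p * e then UNIV else {0})"

end

theory Submission
  imports Defs
begin

text \<open>The homology is computed by an explicit contracting homotopy. Fix the source \<open>z\<^sub>i\<close>
  and let \<open>z\<^sub>i\<^sub>'\<close> be its cyclic successor. On chains of paths starting at \<open>z\<^sub>i\<close>,
  contracting a leading \<open>b\<^sub>i\<^sub>',\<^sub>c b\<^sub>i\<^sub>,\<^sub>i\<^sub>'\<close> into \<open>\<plusminus>b\<^sub>i\<^sub>,\<^sub>c\<close> gives a homotopy \<open>h\<close> (\<open>htpy\<close>)
  with \<open>dh + hd = 1 - \<pi>\<close>, where \<open>\<pi>\<close> (\<open>retract\<close>) retracts onto the span of the identity,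
  of \<open>b\<^sub>i\<^sub>,\<^sub>i\<^sub>'\<close> and of the image of an operator \<open>W\<close> (\<open>wrap\<close>) that precomposes with the loop
  \<open>b\<^sub>i\<^sub>',\<^sub>i b\<^sub>i\<^sub>,\<^sub>i\<^sub>'\<close>, corrected so as to commute with \<open>d\<close>. \<open>W\<close> raises the degree by
  \<open>n - 2\<close>, and stripping the loop is a left inverse of it that also commutes with \<open>d\<close>.
  Induction on path length then shows that every cycle is, up to a boundary, a multiple of
  \<open>W\<^sup>k(id)\<close> or of \<open>W\<^sup>k(b\<^sub>i\<^sub>,\<^sub>i\<^sub>')\<close>; no nonzero multiple of these is a boundary, since after
  stripping all loops it would be a boundary of length less than two.\<close>

section \<open>Finitely supported chains\<close>

definition supp :: "(path \<Rightarrow> 'k::comm_ring_1) \<Rightarrow> path set" where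
  "supp c = {p. c p \<noteq> 0}"

definition finsupp :: "(path \<Rightarrow> 'k::comm_ring_1) \<Rightarrow> bool" where
  "finsupp c \<longleftrightarrow> finite (supp c)"

definition linext :: "(path \<Rightarrow> path \<Rightarrow> 'k) \<Rightarrow> (path \<Rightarrow> 'k::comm_ring_1) \<Rightarrow> path \<Rightarrow> 'k" where
  "linext f c = (\<lambda>q. \<Sum>p\<in>supp c. c p * f p q)"

definition unit_chain :: "path \<Rightarrow> path \<Rightarrow> 'k::comm_ring_1" where
  "unit_chain p = (\<lambda>q. if q = p then 1 else 0)"

definition cons_chain :: "nat \<times> nat \<Rightarrow> (path \<Rightarrow> 'k::comm_ring_1) \<Rightarrow> path \<Rightarrow> 'k" where
  "cons_chain g c = (\<lambda>q. case q of [] \<Rightarrow> 0 | x # r \<Rightarrow> if x = g then c r else 0)"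

lemma linext_eq_sum:
  assumes "finite S" "supp c \<subseteq> S"
  shows "linext f c q = (\<Sum>p\<in>S. c p * f p q)"
  unfolding linext_def
  by (rule sum.mono_neutral_left) (use assms in \<open>auto simp: supp_def\<close>)

lemma finsupp_add: "finsupp c \<Longrightarrow> finsupp c' \<Longrightarrow> finsupp (\<lambda>q. c q + c' q)"
  unfolding finsupp_def supp_def
  by (rule finite_subset[of _ "{p. c p \<noteq> 0} \<union> {p. c' p \<noteq> 0}"]) auto

lemma finsupp_smult: "finsupp c \<Longrightarrow> finsupp (\<lambda>q. a * c q)"
  unfolding finsupp_def supp_def
  by (rule finite_subset[of _ "{p. c p \<noteq> 0}"]) auto

lemma finsupp_uminus: "finsupp c \<Longrightarrow> finsupp (\<lambda>q. - c q)"
  unfolding finsupp_def supp_def by simp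

lemma finsupp_diff: "finsupp c \<Longrightarrow> finsupp c' \<Longrightarrow> finsupp (\<lambda>q. c q - c' q)"
  using finsupp_add[of c "\<lambda>q. - c' q"] finsupp_uminus[of c'] by simp

lemma finsupp_zero[simp]: "finsupp (\<lambda>q. 0)"
  unfolding finsupp_def supp_def by simp

lemma finsupp_unit_chain[simp]: "finsupp (unit_chain p)"
  unfolding finsupp_def supp_def unit_chain_def by simp

lemma finsupp_sum: "finite I \<Longrightarrow> (\<And>x. x \<in> I \<Longrightarrow> finsupp (c x)) \<Longrightarrow> finsupp (\<lambda>q. \<Sum>x\<in>I. c x q)"
  by (induction I rule: finite_induct) (auto intro: finsupp_add)

lemma supp_cons_chain: "supp (cons_chain g c) = Cons g ` supp c"
proof (rule set_eqI)
  fix x show "x \<in> supp (cons_chain g c) \<longleftrightarrow> x \<in> Cons g ` supp c"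
    by (cases x) (auto simp: supp_def cons_chain_def)
qed

lemma finsupp_cons_chain: "finsupp c \<Longrightarrow> finsupp (cons_chain g c)"
  unfolding finsupp_def by (simp add: supp_cons_chain)

lemma linext_add:
  assumes "finsupp c" "finsupp c'"
  shows "linext f (\<lambda>q. c q + c' q) = (\<lambda>q. linext f c q + linext f c' q)"
proof
  fix q
  let ?S = "supp c \<union> supp c'"
  have fS: "finite ?S" using assms by (simp add: finsupp_def)
  have "linext f (\<lambda>q. c q + c' q) q = (\<Sum>p\<in>?S. (c p + c' p) * f p q)"
    by (rule linext_eq_sum) (use fS in \<open>auto simp: supp_def\<close>)
  also have "\<dots> = (\<Sum>p\<in>?S. c p * f p q) + (\<Sum>p\<in>?S. c' p * f p q)"
    by (simp add: distrib_right sum.distrib)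
  also have "\<dots> = linext f c q + linext f c' q"
  proof -
    have "linext f c q = (\<Sum>p\<in>?S. c p * f p q)" by (rule linext_eq_sum) (use fS in auto)
    moreover have "linext f c' q = (\<Sum>p\<in>?S. c' p * f p q)" by (rule linext_eq_sum) (use fS in auto)
    ultimately show ?thesis by simp
  qed
  finally show "linext f (\<lambda>q. c q + c' q) q = linext f c q + linext f c' q" .
qed

lemma linext_smult:
  assumes "finsupp c"
  shows "linext f (\<lambda>q. a * c q) = (\<lambda>q. a * linext f c q)"
proof
  fix q
  have fS: "finite (supp c)" using assms by (simp add: finsupp_def)
  have "linext f (\<lambda>q. a * c q) q = (\<Sum>p\<in>supp c. (a * c p) * f p q)"
    by (rule linext_eq_sum) (use fS in \<open>auto simp: supp_def\<close>)
  also have "\<dots> = a * linext f c q" by (simp add: linext_def sum_distrib_left mult.assoc)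
  finally show "linext f (\<lambda>q. a * c q) q = a * linext f c q" .
qed

lemma linext_zero[simp]: "linext f (\<lambda>q. 0) = (\<lambda>q. 0)"
  by (simp add: linext_def supp_def)

lemma linext_uminus:
  assumes "finsupp c"
  shows "linext f (\<lambda>q. - c q) = (\<lambda>q. - linext f c q)"
  using linext_smult[OF assms, of f "-1"] by simp

lemma linext_diff:
  assumes "finsupp c" "finsupp c'"
  shows "linext f (\<lambda>q. c q - c' q) = (\<lambda>q. linext f c q - linext f c' q)"
  using linext_add[OF assms(1) finsupp_uminus[OF assms(2)], of f] linext_uminus[OF assms(2), of f] by simp

lemma linext_unit_chain[simp]: "linext f (unit_chain p) = f p"
proof
  fix q
  show "linext f (unit_chain p) q = f p q"
    by (subst linext_eq_sum[of "{p}"]) (auto simp: supp_def unit_chain_def)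
qed

lemma linext_sum:
  assumes "finite I" "\<And>x. x \<in> I \<Longrightarrow> finsupp (c x)"
  shows "linext f (\<lambda>q. \<Sum>x\<in>I. c x q) = (\<lambda>q. \<Sum>x\<in>I. linext f (c x) q)"
  using assms
proof (induction I rule: finite_induct)
  case empty then show ?case by simp
next
  case (insert x F)
  have "linext f (\<lambda>q. \<Sum>x\<in>insert x F. c x q) = linext f (\<lambda>q. c x q + (\<Sum>x\<in>F. c x q))"
    using insert by simp
  also have "\<dots> = (\<lambda>q. linext f (c x) q + linext f (\<lambda>q. \<Sum>x\<in>F. c x q) q)"
    using insert by (intro linext_add) (auto intro: finsupp_sum)
  finally show ?case using insert by simp
qed

lemma supp_linext: "supp (linext f c) \<subseteq> (\<Union>p\<in>supp c. supp (f p))"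
proof
  fix x assume "x \<in> supp (linext f c)"
  then have "(\<Sum>p\<in>supp c. c p * f p x) \<noteq> 0" by (simp add: supp_def linext_def)
  then obtain p where "p \<in> supp c" "c p * f p x \<noteq> 0"
    using sum.not_neutral_contains_not_neutral by blast
  then show "x \<in> (\<Union>p\<in>supp c. supp (f p))" by (auto simp: supp_def)
qed

lemma finsupp_linext:
  assumes "finsupp c" "\<And>p. finsupp (f p)"
  shows "finsupp (linext f c)"
proof -
  have "supp (linext f c) \<subseteq> (\<Union>p\<in>supp c. supp (f p))"
    by (rule supp_linext)
  moreover have "finite (\<Union>p\<in>supp c. supp (f p))"
    using assms by (auto simp: finsupp_def)
  ultimately show ?thesis by (simp add: finsupp_def finite_subset)
qed

lemma linext_linext:
  assumes "finsupp c" "\<And>p. finsupp (f p)"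
  shows "linext g (linext f c) = linext (\<lambda>p. linext g (f p)) c"
proof
  fix q
  let ?S = "\<Union>p\<in>supp c. supp (f p)"
  have fS: "finite ?S" using assms by (auto simp: finsupp_def)
  have sub: "supp (linext f c) \<subseteq> ?S"
    by (rule supp_linext)
  have "linext g (linext f c) q = (\<Sum>p'\<in>?S. linext f c p' * g p' q)"
    by (rule linext_eq_sum[OF fS sub])
  also have "\<dots> = (\<Sum>p'\<in>?S. \<Sum>p\<in>supp c. c p * f p p' * g p' q)"
    by (simp add: linext_def sum_distrib_right)
  also have "\<dots> = (\<Sum>p\<in>supp c. c p * (\<Sum>p'\<in>?S. f p p' * g p' q))"
    by (subst sum.swap) (simp add: sum_distrib_left mult.assoc)
  also have "\<dots> = (\<Sum>p\<in>supp c. c p * linext g (f p) q)"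
    by (intro sum.cong refl arg_cong2[where f="(*)"], subst linext_eq_sum[of ?S]) (use fS in auto)
  finally show "linext g (linext f c) q = linext (\<lambda>p. linext g (f p)) c q" by (simp add: linext_def)
qed

lemma linext_cong: "(\<And>p. c p \<noteq> 0 \<Longrightarrow> f p = f' p) \<Longrightarrow> linext f c = linext f' c"
  unfolding linext_def supp_def by auto

lemma linext_add_fun:
  "linext (\<lambda>p q. f1 p q + f2 p q) c = (\<lambda>q. linext f1 c q + linext f2 c q)"
  by (simp add: linext_def distrib_left sum.distrib)

lemma linext_diff_fun:
  "linext (\<lambda>p q. f1 p q - f2 p q) c = (\<lambda>q. linext f1 c q - linext f2 c q)"
  by (simp add: linext_def right_diff_distrib sum_subtractf)

lemma linext_smult_fun:
  "linext (\<lambda>p q. a * f p q) c = (\<lambda>q. a * linext f c q)"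
  by (simp add: linext_def sum_distrib_left mult.left_commute)

lemma linext_zero_fun[simp]: "linext (\<lambda>p q. 0) c = (\<lambda>q. 0)"
  by (simp add: linext_def)

lemma linext_cons_chain:
  assumes "finsupp c"
  shows "linext g (cons_chain a c) = linext (\<lambda>r. g (a # r)) c"
proof
  fix q
  have "supp (cons_chain a c) = Cons a ` supp c" by (rule supp_cons_chain)
  then show "linext g (cons_chain a c) q = linext (\<lambda>r. g (a # r)) c q"
    unfolding linext_def by (simp add: sum.reindex cons_chain_def)
qed

lemma linext_unit_chain_id: "finsupp c \<Longrightarrow> linext unit_chain c = c"
proof
  fix q assume "finsupp c"
  show "linext unit_chain c q = c q"
  proof (cases "c q = 0")
    case True
    then show ?thesis unfolding linext_def unit_chain_def by (auto intro: sum.neutral)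
  next
    case False
    have "(\<Sum>p\<in>supp c. c p * (if q = p then 1 else 0)) = (\<Sum>p\<in>supp c. if q = p then c p else 0)"
      by (rule sum.cong) auto
    also have "\<dots> = c q" using \<open>finsupp c\<close> False by (simp add: finsupp_def supp_def)
    finally show ?thesis unfolding linext_def unit_chain_def .
  qed
qed

lemma linext_unit_chain_Cons: "finsupp c \<Longrightarrow> linext (\<lambda>r. unit_chain (a # r)) c = cons_chain a c"
proof
  fix q assume f: "finsupp c"
  show "linext (\<lambda>r. unit_chain (a # r)) c q = cons_chain a c q"
  proof (cases q)
    case Nil then show ?thesis by (simp add: linext_def unit_chain_def cons_chain_def)
  next
    case (Cons x r)
    show ?thesis
    proof (cases "x = a")
      case True
      have "linext (\<lambda>r. unit_chain (a # r)) c q = linext unit_chain c r"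
        unfolding linext_def unit_chain_def using Cons True by simp
      then show ?thesis using linext_unit_chain_id[OF f] Cons True by (simp add: cons_chain_def)
    next
      case False
      then show ?thesis using Cons by (simp add: linext_def unit_chain_def cons_chain_def)
    qed
  qed
qed

lemma cons_chain_add: "cons_chain g (\<lambda>q. A q + B q) = (\<lambda>q. cons_chain g A q + cons_chain g B q)"
  by (auto simp: cons_chain_def fun_eq_iff split: list.splits)

lemma cons_chain_smult: "cons_chain g (\<lambda>q. a * A q) = (\<lambda>q. a * cons_chain g A q)"
  by (auto simp: cons_chain_def fun_eq_iff split: list.splits)

lemma cons_chain_sum: "cons_chain g (\<lambda>q. \<Sum>x\<in>I. A x q) = (\<lambda>q. \<Sum>x\<in>I. cons_chain g (A x) q)"
  by (auto simp: cons_chain_def fun_eq_iff split: list.splits)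

lemma cons_chain_unit_chain: "cons_chain g (unit_chain p) = unit_chain (g # p)"
  by (auto simp: cons_chain_def unit_chain_def fun_eq_iff split: list.splits)

lemma cons_chain_zero[simp]: "cons_chain g (\<lambda>q. 0) = (\<lambda>q. 0)"
  by (auto simp: cons_chain_def fun_eq_iff split: list.splits)

lemma linext_cons_chain_out: "linext (\<lambda>p. cons_chain g (f p)) c = cons_chain g (linext f c)"
  by (auto simp: cons_chain_def linext_def fun_eq_iff split: list.splits)

lemma linext_sum_fun:
  "finite I \<Longrightarrow> linext (\<lambda>p q. \<Sum>x\<in>I. F x p q) c = (\<lambda>q. \<Sum>x\<in>I. linext (F x) c q)"
  unfolding linext_def by (simp add: sum_distrib_left fun_eq_iff; rule allI; rule sum.swap)

lemma linext_unit_chain_Cons2: "finsupp c \<Longrightarrow> linext (\<lambda>r. unit_chain (u # v # r)) c = cons_chain u (cons_chain v c)"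
proof -
  assume f: "finsupp c"
  have "linext (\<lambda>r. unit_chain (u # r)) (linext (\<lambda>r. unit_chain (v # r)) c) = linext (\<lambda>p. linext (\<lambda>r. unit_chain (u # r)) (unit_chain (v # p))) c"
    by (rule linext_linext[OF f]) simp
  then show ?thesis using f by (simp add: linext_unit_chain_Cons finsupp_cons_chain)
qed

lemma linext_cong_coeffs:
  assumes "finsupp c" "finsupp c'" "\<And>p. G p \<noteq> (\<lambda>q. 0) \<Longrightarrow> c p = c' p"
  shows "linext G c = linext G c'"
proof
  fix q
  let ?S = "supp c \<union> supp c'"
  have fS: "finite ?S" using assms by (simp add: finsupp_def)
  have "linext G c q = (\<Sum>p\<in>?S. c p * G p q)" by (rule linext_eq_sum) (use fS in auto)
  also have "\<dots> = (\<Sum>p\<in>?S. c' p * G p q)"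
  proof (rule sum.cong[OF refl])
    fix p show "c p * G p q = c' p * G p q"
      using assms(3)[of p] by (cases "G p = (\<lambda>q. 0)") auto
  qed
  also have "\<dots> = linext G c' q" by (rule linext_eq_sum[symmetric]) (use fS in auto)
  finally show "linext G c q = linext G c' q" .
qed

lemma linext_restrict:
  assumes "finsupp c"
  shows "linext (\<lambda>p q. if P p then unit_chain p q else 0) c = (\<lambda>q. if P q then c q else 0)"
proof
  fix q
  have "linext (\<lambda>p q. if P p then unit_chain p q else 0) c = linext unit_chain (\<lambda>q. if P q then c q else 0)"
  proof -
    have f2: "finsupp (\<lambda>q. if P q then c q else 0)" using assms unfolding finsupp_def supp_def
      by (rule finite_subset[rotated]) auto
    have "linext (\<lambda>p q. if P p then unit_chain p q else 0) c = linext (\<lambda>p q. if P p then unit_chain p q else 0) (\<lambda>q. if P q then c q else 0)"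
      by (rule linext_cong_coeffs[OF assms f2]) (auto simp: fun_eq_iff)
    also have "\<dots> = linext unit_chain (\<lambda>q. if P q then c q else 0)"
      by (rule linext_cong) (auto simp: fun_eq_iff split: if_splits)
    finally show ?thesis .
  qed
  also have "\<dots> = (\<lambda>q. if P q then c q else 0)"
    by (rule linext_unit_chain_id) (use assms in \<open>auto simp: finsupp_def supp_def intro: finite_subset[rotated]\<close>)
  finally show "linext (\<lambda>p q. if P p then unit_chain p q else 0) c q = (if P q then c q else 0)" by simp
qed

lemma linext_Cons2:
  assumes "finsupp c"
  shows "linext (\<lambda>p q. case p of x # y # r \<Rightarrow> if x = u \<and> y = v then F r q else 0 | _ \<Rightarrow> 0) c
       = linext F (\<lambda>r. c (u # v # r))"
proof -
  let ?c' = "\<lambda>r. c (u # v # r)"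
  have fc': "finsupp ?c'"
  proof -
    have "supp ?c' \<subseteq> (\<lambda>p. drop 2 p) ` supp c"
      by (auto simp: supp_def image_iff intro!: exI[where x="u # v # _"])
    then show ?thesis using assms by (auto simp: finsupp_def intro: finite_subset)
  qed
  have "linext (\<lambda>p q. case p of x # y # r \<Rightarrow> if x = u \<and> y = v then F r q else 0 | _ \<Rightarrow> 0) c
      = linext (\<lambda>p q. case p of x # y # r \<Rightarrow> if x = u \<and> y = v then F r q else 0 | _ \<Rightarrow> 0) (cons_chain u (cons_chain v ?c'))"
  proof (rule linext_cong_coeffs[OF assms finsupp_cons_chain[OF finsupp_cons_chain[OF fc']]])
    fix p assume "(\<lambda>q. case p of x # y # r \<Rightarrow> if x = u \<and> y = v then F r q else 0 | _ \<Rightarrow> 0) \<noteq> (\<lambda>q. 0)"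
    note asm = this
    have "\<exists>r. p = u # v # r"
    proof (rule ccontr)
      assume "\<nexists>r. p = u # v # r"
      then have "(\<lambda>q. case p of x # y # r \<Rightarrow> if x = u \<and> y = v then F r q else 0 | _ \<Rightarrow> 0) = (\<lambda>q. 0)"
        by (auto split: list.split simp: fun_eq_iff)
      with asm show False by simp
    qed
    then obtain r where "p = u # v # r" by blast
    then show "c p = cons_chain u (cons_chain v ?c') p" by (simp add: cons_chain_def)
  qed
  also have "\<dots> = linext F ?c'"
    by (simp add: linext_cons_chain finsupp_cons_chain fc')
  finally show ?thesis .
qed

lemma finsupp_length_bound: "finsupp c \<Longrightarrow> \<exists>N. \<forall>p. c p \<noteq> 0 \<longrightarrow> length p < N"
proof -
  assume "finsupp c"
  then have "finite (length ` supp c)" by (simp add: finsupp_def)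
  then obtain N where "\<forall>x\<in>length ` supp c. x < N" by (meson finite_nat_set_iff_bounded)
  then show ?thesis by (auto simp: supp_def)
qed

section \<open>The differential on paths\<close>

lemma sgn1_add: "(sgn1 (a + b) :: 'k::comm_ring_1) = sgn1 a * sgn1 b"
  unfolding sgn1_def by auto

lemma sgn1_mult: "(sgn1 a :: 'k::comm_ring_1) * sgn1 b = sgn1 (a + b)"
  by (simp add: sgn1_add)

lemma sgn1_mult_left: "(sgn1 a :: 'k::comm_ring_1) * (sgn1 b * x) = sgn1 (a + b) * x"
  by (simp add: sgn1_add)

lemma sgn1_sq: "(sgn1 a :: 'k::comm_ring_1) * sgn1 a = 1"
  unfolding sgn1_def by auto

lemma sgn1_even: "even a \<Longrightarrow> (sgn1 a :: 'k::comm_ring_1) = 1"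
  by (simp add: sgn1_def)

lemma sgn1_cong_even: "even (a - b) \<Longrightarrow> (sgn1 a :: 'k::comm_ring_1) = sgn1 b"
  unfolding sgn1_def by (metis add_diff_cancel_left' diff_add_cancel even_add)

lemma sgn1_add_even: "a = b + 2 * k \<Longrightarrow> (sgn1 a :: 'k::comm_ring_1) = sgn1 b"
  by (rule sgn1_cong_even) simp

lemma sgn1_minus_1: "(sgn1 (a - 1) :: 'k::comm_ring_1) = - sgn1 a"
  unfolding sgn1_def by auto

text \<open>The vertices strictly between \<open>a\<close> and \<open>b\<close> in the cyclic order \<open>1 < 2 < \<dots> < m < 1\<close>:
  these index the summands of \<open>d(b\<^sub>a\<^sub>,\<^sub>b)\<close>.\<close>
definition between :: "nat \<Rightarrow> nat \<Rightarrow> nat \<Rightarrow> nat set" where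
  "between m a b = (if a < b then {a<..<b} else {a<..m} \<union> {1..<b})"

lemma finite_between[simp]: "finite (between m a b)"
  by (simp add: between_def)

lemma between_neq: "x \<in> between m a b \<Longrightarrow> x \<noteq> a \<and> x \<noteq> b"
  by (auto simp: between_def split: if_splits)

lemma between_range: "b \<le> m \<Longrightarrow> x \<in> between m a b \<Longrightarrow> 1 \<le> x \<and> x \<le> m"
  by (auto simp: between_def split: if_splits)

lemma gdeg_between: "x \<in> between m a b \<Longrightarrow> gdeg n (a,b) = gdeg n (a,x) + gdeg n (x,b) + 1"
  by (auto simp: between_def gdeg_def split: if_splits)

lemma dgen_eq_between:
  "(dgen n m (a,b) q :: 'k::comm_ring_1) =
     (\<Sum>x\<in>between m a b. if q = [(a,x),(x,b)] then sgn1 (gdeg n (x,b)) else 0)"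
proof (cases "a < b")
  case True
  show ?thesis using True unfolding dgen_def between_def Let_def
    by (auto intro!: sum.cong sgn1_cong_even simp: gdeg_def)
next
  case False
  have d: "{a<..m} \<inter> {1..<b} = {}" using False by auto
  show ?thesis
    apply (simp only: dgen_def between_def Let_def fst_conv snd_conv False if_False)
    apply (subst sum.union_disjoint[OF _ _ d]; simp)
    apply (intro arg_cong2[where f="(+)"] sum.cong refl)
    using False apply (auto intro!: sgn1_cong_even simp: gdeg_def)
    done
qed

definition dgen_chain :: "nat \<Rightarrow> nat \<Rightarrow> nat \<times> nat \<Rightarrow> path \<Rightarrow> path \<Rightarrow> 'k::comm_ring_1" where
  "dgen_chain n m g r = (\<lambda>q. \<Sum>x\<in>between m (fst g) (snd g).
       sgn1 (gdeg n (x, snd g)) * unit_chain ((fst g, x) # (x, snd g) # r) q)"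

lemma pdeg_Nil[simp]: "pdeg n [] = 0" by (simp add: pdeg_def)
lemma pdeg_Cons[simp]: "pdeg n (g # r) = gdeg n g + pdeg n r" by (simp add: pdeg_def)

lemma dpath_Nil[simp]: "dpath n m [] = (\<lambda>q. 0)"
  by (simp add: dpath_def fun_eq_iff)

lemma dgen_chain_coeff:
  "(dgen_chain n m g r q :: 'k::comm_ring_1) =
     (case q of x0 # x1 # q' \<Rightarrow> if q' = r then dgen n m g [x0, x1] else 0 | _ \<Rightarrow> 0)"
  by (cases g) (auto simp: dgen_chain_def unit_chain_def dgen_eq_between intro!: sum.cong sum.neutral
      split: list.split)

lemma dpath_Cons:
  "(dpath n m (g # r) :: path \<Rightarrow> 'k::comm_ring_1) =
     (\<lambda>q. sgn1 (pdeg n r) * dgen_chain n m g r q + cons_chain g (dpath n m r) q)"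
proof
  fix q :: path
  let ?T = "\<lambda>t. (sgn1 (pdeg n (drop (Suc t) (g # r))) :: 'k) *
        (if length q = Suc (length (g # r)) \<and> take t q = take t (g # r) \<and>
            drop (Suc (Suc t)) q = drop (Suc t) (g # r)
         then dgen n m ((g # r) ! t) [q ! t, q ! Suc t] else 0)"
  have "dpath n m (g # r) q = (\<Sum>t<Suc (length r). ?T t)"
    by (simp add: dpath_def)
  also have "\<dots> = ?T 0 + (\<Sum>t<length r. ?T (Suc t))"
    by (subst sum.lessThan_Suc_shift) simp
  also have "?T 0 = sgn1 (pdeg n r) * dgen_chain n m g r q"
    by (auto simp: dgen_chain_coeff length_Suc_conv split: list.split)
  also have "(\<Sum>t<length r. ?T (Suc t)) = cons_chain g (dpath n m r) q"
  proof (cases q)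
    case Nil then show ?thesis by (simp add: cons_chain_def)
  next
    case (Cons x q')
    show ?thesis
    proof (cases "x = g")
      case True
      have qq: "q = g # q'" using Cons True by simp
      show ?thesis unfolding qq by (simp add: cons_chain_def dpath_def cong: if_cong)
    next
      case False
      then show ?thesis using Cons by (simp add: cons_chain_def)
    qed
  qed
  finally show "(dpath n m (g # r) q :: 'k) = sgn1 (pdeg n r) * dgen_chain n m g r q + cons_chain g (dpath n m r) q" .
qed

lemma finsupp_smult_unit_chain[simp]: "finsupp (\<lambda>q. a * unit_chain p q)"
  by (rule finsupp_smult) simp

lemma finsupp_dgen_chain[simp]: "finsupp (dgen_chain n m g r)"
  unfolding dgen_chain_def by (rule finsupp_sum) auto

lemma finsupp_dpath[simp]: "finsupp (dpath n m p)"
proof (induction p)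
  case Nil then show ?case by simp
next
  case (Cons g r) then show ?case
    by (simp add: dpath_Cons finsupp_add finsupp_smult finsupp_cons_chain)
qed

lemma linext_dgen_chain:
  "linext f (dgen_chain n m g r) = (\<lambda>q. \<Sum>x\<in>between m (fst g) (snd g).
       sgn1 (gdeg n (x, snd g)) * f ((fst g, x) # (x, snd g) # r) q)"
  unfolding dgen_chain_def
  by (subst linext_sum) (auto simp: linext_smult)

lemma dgen_chain_nonzero:
  assumes "(dgen_chain n m g r q :: 'k::comm_ring_1) \<noteq> 0"
  shows "\<exists>x\<in>between m (fst g) (snd g). q = (fst g, x) # (x, snd g) # r"
proof (rule ccontr)
  assume "\<not> ?thesis"
  then have "(dgen_chain n m g r q :: 'k) = 0" unfolding dgen_chain_def unit_chain_def by (auto intro: sum.neutral)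
  with assms show False by simp
qed

lemma pdeg_dpath: "(dpath n m p q :: 'k::comm_ring_1) \<noteq> 0 \<Longrightarrow> pdeg n q = pdeg n p - 1"
proof (induction p arbitrary: q)
  case Nil then show ?case by simp
next
  case (Cons g r)
  obtain a b where g: "g = (a,b)" by force
  have "(dgen_chain n m g r q :: 'k) \<noteq> 0 \<or> (cons_chain g (dpath n m r) q :: 'k) \<noteq> 0"
    using Cons.prems by (auto simp: dpath_Cons)
  then show ?case
  proof
    assume "(dgen_chain n m g r q :: 'k) \<noteq> 0"
    then obtain x where "x \<in> between m a b" "q = (a,x) # (x,b) # r" using dgen_chain_nonzero g by fastforce
    then show ?thesis using gdeg_between[of x m a b n] g by simp
  next
    assume h: "(cons_chain g (dpath n m r) q :: 'k) \<noteq> 0"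
    then obtain q' where "q = g # q'" "(dpath n m r q' :: 'k) \<noteq> 0"
      by (cases q) (auto simp: cons_chain_def split: if_splits)
    then show ?thesis using Cons.IH by simp
  qed
qed

fun valid_from :: "nat \<Rightarrow> nat \<Rightarrow> path \<Rightarrow> bool" where
  "valid_from m i [] = True"
| "valid_from m i (g # r) = (fst g = i \<and> 1 \<le> i \<and> i \<le> m \<and> snd g \<noteq> i \<and> 1 \<le> snd g \<and> snd g \<le> m \<and> valid_from m (snd g) r)"

fun target :: "nat \<Rightarrow> path \<Rightarrow> nat" where
  "target i [] = i"
| "target i (g # r) = target (snd g) r"

lemma is_path_Nil: "is_path m i j [] \<longleftrightarrow> i = j"
  by (simp add: is_path_def)

lemma is_path_Cons:
  "is_path m i j (g # r) \<longleftrightarrow>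
    fst g = i \<and> fst g \<noteq> snd g \<and> fst g \<in> {1..m} \<and> snd g \<in> {1..m} \<and> is_path m (snd g) j r"
proof (cases r)
  case Nil then show ?thesis by (auto simp: is_path_def)
next
  case (Cons g' r')
  show ?thesis
    unfolding is_path_def using Cons by (auto simp: All_less_Suc2)
qed

lemma is_path_iff_valid_from: "is_path m i j p \<longleftrightarrow> valid_from m i p \<and> target i p = j"
  by (induction p arbitrary: i) (auto simp: is_path_Nil is_path_Cons)

lemma length_dpath: "(dpath n m p q :: 'k::comm_ring_1) \<noteq> 0 \<Longrightarrow> length q = Suc (length p)"
proof (rule ccontr)
  assume a: "(dpath n m p q :: 'k) \<noteq> 0" "length q \<noteq> Suc (length p)"
  then have "(dpath n m p q :: 'k) = 0" unfolding dpath_def by (intro sum.neutral) simp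
  with a show False by simp
qed

lemma valid_from_dpath: "valid_from m a p \<Longrightarrow> (dpath n m p q :: 'k::comm_ring_1) \<noteq> 0 \<Longrightarrow> valid_from m a q \<and> target a q = target a p"
proof (induction p arbitrary: a q)
  case Nil then show ?case by simp
next
  case (Cons g r)
  obtain b where g: "g = (a,b)" using Cons.prems by (cases g) auto
  have v: "1 \<le> a" "a \<le> m" "1 \<le> b" "b \<le> m" "a \<noteq> b" "valid_from m b r" using Cons.prems g by auto
  have "(dgen_chain n m g r q :: 'k) \<noteq> 0 \<or> (cons_chain g (dpath n m r) q :: 'k) \<noteq> 0"
    using Cons.prems by (auto simp: dpath_Cons)
  then show ?case
  proof
    assume "(dgen_chain n m g r q :: 'k) \<noteq> 0"
    then obtain x where x: "x \<in> between m a b" "q = (a,x) # (x,b) # r" using dgen_chain_nonzero g by fastforce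
    then show ?thesis using between_range[OF v(4) x(1)] between_neq[OF x(1)] v g by auto
  next
    assume h: "(cons_chain g (dpath n m r) q :: 'k) \<noteq> 0"
    then obtain q' where "q = g # q'" "(dpath n m r q' :: 'k) \<noteq> 0"
      by (cases q) (auto simp: cons_chain_def split: if_splits)
    then show ?thesis using Cons.IH[OF v(6)] v g by auto
  qed
qed

lemma dch_eq_linext: "dch n m c = linext (dpath n m) c"
  by (simp add: dch_def linext_def supp_def fun_eq_iff)

lemma gdeg_loop: "a \<noteq> b \<Longrightarrow> gdeg n (a,b) + gdeg n (b,a) = int n - 2"
  by (auto simp: gdeg_def)

lemma linext_dpath_Cons:
  "linext f (dpath n m (g # r)) =
     (\<lambda>q. sgn1 (pdeg n r) * linext f (dgen_chain n m g r) q + linext (\<lambda>r. f (g # r)) (dpath n m r) q)"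
  by (simp add: dpath_Cons linext_add finsupp_smult finsupp_cons_chain linext_smult linext_cons_chain)

lemma linext_dgen_chain_chain:
  assumes "finsupp c"
  shows "linext (dgen_chain n m (a,b)) c = (\<lambda>q. \<Sum>x\<in>between m a b. sgn1 (gdeg n (x, b)) * cons_chain (a,x) (cons_chain (x,b) c) q)"
  unfolding dgen_chain_def
  by (simp add: linext_sum_fun linext_smult_fun linext_unit_chain_Cons2[OF assms])

lemma between_swap:
  assumes "1 \<le> a" "a \<le> m" "1 \<le> b" "b \<le> m" "a \<noteq> b"
  shows "(x \<in> between m a b \<and> u \<in> between m a x) \<longleftrightarrow> (u \<in> between m a b \<and> x \<in> between m u b)"
  using assms unfolding between_def by (auto split: if_splits)

lemma sum_between_swap:
  assumes "1 \<le> a" "a \<le> m" "1 \<le> b" "b \<le> m" "a \<noteq> b"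
  shows "(\<Sum>x\<in>between m a b. \<Sum>u\<in>between m a x. f u x) = (\<Sum>u\<in>between m a b. \<Sum>x\<in>between m u b. f u x)"
proof -
  have "(\<Sum>x\<in>between m a b. \<Sum>u\<in>between m a x. f u x) = (\<Sum>(x,u)\<in>Sigma (between m a b) (between m a). f u x)"
    by (rule sum.Sigma) auto
  also have "\<dots> = (\<Sum>(u,x)\<in>Sigma (between m a b) (\<lambda>u. between m u b). f u x)"
    apply (rule sum.reindex_bij_witness[where i=prod.swap and j=prod.swap])
    using between_swap[OF assms] apply auto
     apply blast+
    done
  also have "\<dots> = (\<Sum>u\<in>between m a b. \<Sum>x\<in>between m u b. f u x)"
    by (rule sum.Sigma[symmetric]) auto
  finally show ?thesis .
qed

section \<open>\<open>d\<^sup>2 = 0\<close>\<close>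

lemma sgn1_distrib_cancel:
  "(sgn1 s :: 'k::comm_ring_1) * (sgn1 g * (sgn1 (g + s) * U + (sgn1 s * V + P)))
     = U + sgn1 g * V + sgn1 s * (sgn1 g * P)"
proof -
  have s1: "(sgn1 s :: 'k) * (sgn1 g * sgn1 (g + s)) = 1"
    by (simp add: sgn1_mult sgn1_mult_left sgn1_even)
  have "(sgn1 s :: 'k) * (sgn1 g * (sgn1 (g + s) * U + (sgn1 s * V + P)))
      = (sgn1 s * (sgn1 g * sgn1 (g + s))) * U + (sgn1 s * sgn1 s) * (sgn1 g * V) + sgn1 s * (sgn1 g * P)"
    by (simp only: distrib_left mult.assoc mult.left_commute add.assoc)
  then show ?thesis by (simp only: s1 sgn1_sq mult_1_left)
qed

text \<open>\<open>d\<^sup>2 = 0\<close> on a single generator: both double sums run over the pairs \<open>u < x\<close> of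
  vertices cyclically between \<open>a\<close> and \<open>b\<close>, with opposite signs.\<close>
lemma dgen_dgen_cancel:
  assumes "1 \<le> a" "a \<le> m" "1 \<le> b" "b \<le> m" "a \<noteq> b"
  shows "(\<Sum>x\<in>between m a b. \<Sum>u\<in>between m a x. sgn1 (gdeg n (u, x)) * D u x) +
         (\<Sum>u\<in>between m a b. sgn1 (gdeg n (u, b)) *
            (\<Sum>x\<in>between m u b. sgn1 (gdeg n (x, b)) * D u x)) = (0 :: 'k::comm_ring_1)"
proof -
  have cancel: "sgn1 (gdeg n (u, x)) * D u x + sgn1 (gdeg n (u, b)) * (sgn1 (gdeg n (x, b)) * D u x) = 0"
    if "x \<in> between m u b" for u x
  proof -
    have "(sgn1 (gdeg n (u, x)) :: 'k) + sgn1 (gdeg n (u, b)) * sgn1 (gdeg n (x, b)) = 0"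
      using gdeg_between[OF that, of n] by (simp add: sgn1_def)
    then show ?thesis by (simp add: distrib_right[symmetric] mult.assoc[symmetric])
  qed
  show ?thesis
    unfolding sum_between_swap[OF assms]
    by (simp add: cancel sum_distrib_left sum.distrib[symmetric] sum.neutral)
qed

lemma bd_dgen_chain:
  "linext (dpath n m) (dgen_chain n m (a,b) r) q =
     (\<Sum>x\<in>between m a b. sgn1 (gdeg n (x, b)) *
        (sgn1 (gdeg n (x,b) + pdeg n r) *
           (\<Sum>u\<in>between m a x. sgn1 (gdeg n (u, x)) * unit_chain ((a,u) # (u,x) # (x,b) # r) q) +
         (sgn1 (pdeg n r) *
           (\<Sum>v\<in>between m x b. sgn1 (gdeg n (v, b)) * unit_chain ((a,x) # (x,v) # (v,b) # r) q) +
          cons_chain (a,x) (cons_chain (x,b) (dpath n m r)) q)) :: 'k::comm_ring_1)"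
  unfolding linext_dgen_chain
  by (simp add: dpath_Cons cons_chain_add cons_chain_smult dgen_chain_def cons_chain_sum
      cons_chain_unit_chain)

lemma linext_dpath_Cons_cycle:
  assumes "linext (dpath n m) (dpath n m r) = (\<lambda>q. 0 :: 'k::comm_ring_1)"
  shows "linext (\<lambda>r'. dpath n m ((a,b) # r')) (dpath n m r) q =
     - sgn1 (pdeg n r) * (\<Sum>x\<in>between m a b. sgn1 (gdeg n (x, b)) *
         cons_chain (a,x) (cons_chain (x,b) (dpath n m r)) q :: 'k)"
proof -
  have "linext (\<lambda>r'. dpath n m ((a,b) # r')) (dpath n m r :: path \<Rightarrow> 'k) =
      linext (\<lambda>r' q. - sgn1 (pdeg n r) * dgen_chain n m (a,b) r' q + cons_chain (a,b) (dpath n m r') q)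
        (dpath n m r)"
  proof (rule linext_cong)
    fix r' assume "(dpath n m r r' :: 'k) \<noteq> 0"
    then have "pdeg n r' = pdeg n r - 1" by (rule pdeg_dpath)
    then show "dpath n m ((a,b) # r') =
        (\<lambda>q. - sgn1 (pdeg n r) * dgen_chain n m (a,b) r' q + cons_chain (a,b) (dpath n m r') q :: 'k)"
      by (simp add: dpath_Cons sgn1_minus_1)
  qed
  also have "\<dots> = (\<lambda>q. - sgn1 (pdeg n r) * linext (dgen_chain n m (a,b)) (dpath n m r) q)"
    by (subst linext_add_fun, subst linext_smult_fun, subst linext_cons_chain_out) (simp add: assms)
  finally show ?thesis by (simp add: linext_dgen_chain_chain)
qed

lemma linext_dpath_dpath:
  "valid_from m a p \<Longrightarrow> linext (dpath n m) (dpath n m p) = (\<lambda>q. 0 :: 'k::comm_ring_1)"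
proof (induction p arbitrary: a)
  case Nil then show ?case by simp
next
  case (Cons g r)
  obtain b where g: "g = (a,b)" using Cons.prems by (cases g) auto
  have v: "1 \<le> a" "a \<le> m" "1 \<le> b" "b \<le> m" "a \<noteq> b" "valid_from m b r" using Cons.prems g by auto
  have IH: "linext (dpath n m) (dpath n m r) = (\<lambda>q. 0 :: 'k)" using Cons.IH v(6) .
  show ?case
  proof
    fix q
    let ?s = "sgn1 (pdeg n r) :: 'k"
    let ?U = "\<lambda>x. \<Sum>u\<in>between m a x. sgn1 (gdeg n (u, x)) * unit_chain ((a,u) # (u,x) # (x,b) # r) q :: 'k"
    let ?V = "\<lambda>x. \<Sum>v\<in>between m x b. sgn1 (gdeg n (v, b)) * unit_chain ((a,x) # (x,v) # (v,b) # r) q :: 'k"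
    let ?P = "\<lambda>x. cons_chain (a,x) (cons_chain (x,b) (dpath n m r)) q :: 'k"
    have "(linext (dpath n m) (dpath n m ((a,b) # r)) q :: 'k) =
        ?s * linext (dpath n m) (dgen_chain n m (a,b) r) q
        + linext (\<lambda>r'. dpath n m ((a,b) # r')) (dpath n m r) q"
      by (simp add: linext_dpath_Cons)
    also have "\<dots> = ?s * (\<Sum>x\<in>between m a b. sgn1 (gdeg n (x, b)) *
          (sgn1 (gdeg n (x,b) + pdeg n r) * ?U x + (?s * ?V x + ?P x)))
        - ?s * (\<Sum>x\<in>between m a b. sgn1 (gdeg n (x, b)) * ?P x)"
      by (simp add: bd_dgen_chain linext_dpath_Cons_cycle[OF IH])
    also have "\<dots> = (\<Sum>x\<in>between m a b. ?U x + sgn1 (gdeg n (x, b)) * ?V x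
          + ?s * (sgn1 (gdeg n (x, b)) * ?P x))
        - ?s * (\<Sum>x\<in>between m a b. sgn1 (gdeg n (x, b)) * ?P x)"
      by (subst sum_distrib_left, subst sum.cong[OF refl sgn1_distrib_cancel]) (rule refl)
    also have "\<dots> = (\<Sum>x\<in>between m a b. ?U x) + (\<Sum>x\<in>between m a b. sgn1 (gdeg n (x, b)) * ?V x)"
      by (simp add: sum.distrib sum_distrib_left)
    also have "\<dots> = 0"
      by (rule dgen_dgen_cancel[OF v(1-5)])
    finally show "(linext (dpath n m) (dpath n m (g # r)) q :: 'k) = 0" using g by simp
  qed
qed

section \<open>Homology groups\<close>

lemma chains_finsupp: "c \<in> chains n m i j d \<Longrightarrow> finsupp c"
  by (simp add: chains_def finsupp_def supp_def)

lemma chains_add: "a \<in> chains n m i j d \<Longrightarrow> b \<in> chains n m i j d \<Longrightarrow> (\<lambda>q. a q + b q) \<in> chains n m i j d"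
proof -
  assume a: "a \<in> chains n m i j d" and b: "b \<in> chains n m i j d"
  have "finsupp (\<lambda>q. a q + b q)" using chains_finsupp[OF a] chains_finsupp[OF b] by (rule finsupp_add)
  moreover have "a p + b p \<noteq> 0 \<Longrightarrow> is_path m i j p \<and> pdeg n p = d" for p
    using a b unfolding chains_def by (cases "a p = 0") auto
  ultimately show ?thesis by (simp add: chains_def finsupp_def supp_def)
qed

lemma chains_smult: "a \<in> chains n m i j d \<Longrightarrow> (\<lambda>q. x * a q) \<in> chains n m i j d"
proof -
  assume a: "a \<in> chains n m i j d"
  have "finsupp (\<lambda>q. x * a q)" using chains_finsupp[OF a] by (rule finsupp_smult)
  moreover have "x * a p \<noteq> 0 \<Longrightarrow> is_path m i j p \<and> pdeg n p = d" for p
    using a unfolding chains_def by (cases "a p = 0") auto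
  ultimately show ?thesis by (simp add: chains_def finsupp_def supp_def)
qed

lemma chains_zero: "(\<lambda>q. 0) \<in> chains n m i j d"
  by (simp add: chains_def)

lemma dch_add: "a \<in> chains n m i j d \<Longrightarrow> b \<in> chains n m i j d \<Longrightarrow>
    dch n m (\<lambda>q. a q + b q) = (\<lambda>q. dch n m a q + dch n m b q)"
  by (simp add: dch_eq_linext linext_add chains_finsupp)

lemma dch_smult: "a \<in> chains n m i j d \<Longrightarrow> dch n m (\<lambda>q. x * a q) = (\<lambda>q. x * dch n m a q)"
  by (simp add: dch_eq_linext linext_smult chains_finsupp)

lemma dch_zero: "dch n m (\<lambda>q. 0) = (\<lambda>q. 0)"
  by (simp add: dch_eq_linext)

lemma boundaries_add: "x \<in> boundaries n m i j d \<Longrightarrow> y \<in> boundaries n m i j d \<Longrightarrow> (\<lambda>q. x q + y q) \<in> boundaries n m i j d"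
proof -
  assume "x \<in> boundaries n m i j d" "y \<in> boundaries n m i j d"
  then obtain a b where a: "a \<in> chains n m i j (d+1)" "x = dch n m a" and b: "b \<in> chains n m i j (d+1)" "y = dch n m b"
    unfolding boundaries_def by blast
  have "(\<lambda>q. x q + y q) = dch n m (\<lambda>q. a q + b q)" using a b dch_add[OF a(1) b(1)] by simp
  then show ?thesis unfolding boundaries_def using chains_add[OF a(1) b(1)] by blast
qed

lemma boundaries_smult: "x \<in> boundaries n m i j d \<Longrightarrow> (\<lambda>q. c * x q) \<in> boundaries n m i j d"
proof -
  assume "x \<in> boundaries n m i j d"
  then obtain a where a: "a \<in> chains n m i j (d+1)" "x = dch n m a"
    unfolding boundaries_def by blast
  have "(\<lambda>q. c * x q) = dch n m (\<lambda>q. c * a q)" using a dch_smult[OF a(1)] by simp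
  then show ?thesis unfolding boundaries_def using chains_smult[OF a(1)] by blast
qed

lemma boundaries_zero: "(\<lambda>q. 0) \<in> boundaries n m i j d"
  unfolding boundaries_def
proof (rule image_eqI)
  show "(\<lambda>q. 0) = dch n m (\<lambda>q. 0)" by (simp add: dch_zero)
  show "(\<lambda>q. 0) \<in> chains n m i j (d + 1)" by (rule chains_zero)
qed

lemma boundaries_diff: "x \<in> boundaries n m i j d \<Longrightarrow> y \<in> boundaries n m i j d \<Longrightarrow> (\<lambda>q. x q - y q) \<in> boundaries n m i j d"
proof -
  assume x: "x \<in> boundaries n m i j d" and y: "y \<in> boundaries n m i j d"
  have "(\<lambda>q. (-1) * y q) \<in> boundaries n m i j d" by (rule boundaries_smult[OF y])
  from boundaries_add[OF x this] have "(\<lambda>q. x q + (-1) * y q) \<in> boundaries n m i j d" .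
  moreover have "(\<lambda>q. x q + (-1) * y q) = (\<lambda>q. x q - y q)" by (rule ext) simp
  ultimately show ?thesis by simp
qed

lemma coset_eq_iff:
  "(coset (boundaries n m i j d) c = coset (boundaries n m i j d) c') \<longleftrightarrow> (\<lambda>q. c q - c' q) \<in> boundaries n m i j d"
  (is "?L \<longleftrightarrow> ?R")
proof
  assume ?L
  have "c \<in> coset (boundaries n m i j d) c"
    unfolding coset_def using boundaries_zero[of n m i j d] by force
  then have "c \<in> coset (boundaries n m i j d) c'" using \<open>?L\<close> by simp
  then obtain b where b: "b \<in> boundaries n m i j d" "c = (\<lambda>q. c' q + b q)" unfolding coset_def by blast
  then have "(\<lambda>q. c q - c' q) = b" by auto
  then show ?R using b by simp
next
  assume r: ?R
  show ?L
  proof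
    show "coset (boundaries n m i j d) c \<subseteq> coset (boundaries n m i j d) c'"
    proof
      fix x assume "x \<in> coset (boundaries n m i j d) c"
      then obtain b where b: "b \<in> boundaries n m i j d" "x = (\<lambda>q. c q + b q)" unfolding coset_def by blast
      have m1: "(\<lambda>q. (c q - c' q) + b q) \<in> boundaries n m i j d" using boundaries_add[OF r b(1)] by simp
      have m2: "x = (\<lambda>q. c' q + ((c q - c' q) + b q))" using b by auto
      show "x \<in> coset (boundaries n m i j d) c'" unfolding coset_def
        by (rule CollectI, rule exI[where x="\<lambda>q. (c q - c' q) + b q"]) (use m1 m2 in simp)
    qed
  next
    show "coset (boundaries n m i j d) c' \<subseteq> coset (boundaries n m i j d) c"
    proof
      fix x assume "x \<in> coset (boundaries n m i j d) c'"
      then obtain b where b: "b \<in> boundaries n m i j d" "x = (\<lambda>q. c' q + b q)" unfolding coset_def by blast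
      have m1: "(\<lambda>q. b q - (c q - c' q)) \<in> boundaries n m i j d" using boundaries_diff[OF b(1) r] by simp
      have m2: "x = (\<lambda>q. c q + (b q - (c q - c' q)))" using b by auto
      show "x \<in> coset (boundaries n m i j d) c" unfolding coset_def
        by (rule CollectI, rule exI[where x="\<lambda>q. b q - (c q - c' q)"]) (use m1 m2 in simp)
    qed
  qed
qed

lemma cycles_smult: "a \<in> cycles n m i j d \<Longrightarrow> (\<lambda>q. x * a q) \<in> cycles n m i j d"
proof -
  assume "a \<in> cycles n m i j d"
  then have a: "a \<in> chains n m i j d" "\<And>q. dch n m a q = 0" unfolding cycles_def by auto
  have "dch n m (\<lambda>q. x * a q) = (\<lambda>q. x * dch n m a q)" by (rule dch_smult[OF a(1)])
  then have "\<forall>q. dch n m (\<lambda>q. x * a q) q = 0" using a(2) by simp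
  then show ?thesis unfolding cycles_def using chains_smult[OF a(1)] by blast
qed

lemma cycles_zero: "(\<lambda>q. 0 :: 'k::comm_ring_1) \<in> cycles n m i j d"
proof -
  have "\<forall>q. dch n m (\<lambda>q. 0 :: 'k::comm_ring_1) q = 0" by (simp add: dch_zero)
  then show ?thesis unfolding cycles_def using chains_zero by blast
qed

lemma homology_iso_zero:
  assumes "\<And>c :: path \<Rightarrow> 'k::comm_ring_1. c \<in> cycles n m i j d \<Longrightarrow> c \<in> boundaries n m i j d"
  shows "homology_iso n m i j d ({0} :: 'k set)"
proof -
  let ?B = "boundaries n m i j d :: (path \<Rightarrow> 'k) set"
  have "homology n m i j d = {coset ?B (\<lambda>q. 0)}"
  proof
    show "homology n m i j d \<subseteq> {coset ?B (\<lambda>q. 0)}"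
    proof
      fix X :: "(path \<Rightarrow> 'k) set" assume "X \<in> homology n m i j d"
      then obtain c where c: "c \<in> cycles n m i j d" "X = coset ?B c" unfolding homology_def by blast
      have "(\<lambda>q. c q - 0) \<in> ?B" using assms[OF c(1)] by simp
      then have "coset ?B c = coset ?B (\<lambda>q. 0)" by (simp only: coset_eq_iff)
      then show "X \<in> {coset ?B (\<lambda>q. 0)}" using c by simp
    qed
    show "{coset ?B (\<lambda>q. 0)} \<subseteq> homology n m i j d"
      unfolding homology_def using cycles_zero by blast
  qed
  then show ?thesis unfolding homology_iso_def
    by (intro exI[where x="\<lambda>X. 0"]) (auto simp: bij_betw_def)
qed

lemma coset_coeff:
  fixes z :: "path \<Rightarrow> 'k::comm_ring_1"
  assumes free: "\<And>a. (\<lambda>q. a * z q) \<in> boundaries n m i j d \<Longrightarrow> a = 0"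
    and "(\<lambda>q. c q - a * z q) \<in> boundaries n m i j d"
  shows "(SOME a. coset (boundaries n m i j d) c = coset (boundaries n m i j d) (\<lambda>q. a * z q)) = a"
proof -
  let ?B = "boundaries n m i j d :: (path \<Rightarrow> 'k) set"
  have uniq: "a' = a" if "coset ?B (\<lambda>q. a' * z q) = coset ?B (\<lambda>q. a * z q)" for a'
  proof -
    have "(\<lambda>q. (a' - a) * z q) \<in> ?B"
      using that by (simp add: coset_eq_iff algebra_simps)
    then show ?thesis using free by fastforce
  qed
  have "coset ?B c = coset ?B (\<lambda>q. a * z q)" using assms(2) by (simp add: coset_eq_iff)
  then show ?thesis by (auto intro!: some_equality dest: uniq[OF sym])
qed

text \<open>A homology group generated freely by the class of one cycle \<open>z\<close> is a copy of \<open>k\<close>;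
  the isomorphism reads off the coefficient of \<open>z\<close>.\<close>
lemma homology_iso_UNIV:
  fixes z :: "path \<Rightarrow> 'k::comm_ring_1"
  assumes z: "z \<in> cycles n m i j d"
    and gen: "\<And>c. c \<in> cycles n m i j d \<Longrightarrow> \<exists>a. (\<lambda>q. c q - a * z q) \<in> boundaries n m i j d"
    and free: "\<And>a. (\<lambda>q. a * z q) \<in> boundaries n m i j d \<Longrightarrow> a = 0"
  shows "homology_iso n m i j d (UNIV :: 'k set)"
proof -
  let ?B = "boundaries n m i j d :: (path \<Rightarrow> 'k) set"
  define \<psi> where "\<psi> = (\<lambda>X. SOME a. X = coset ?B (\<lambda>q. a * z q))"
  have coeff: "\<psi> (coset ?B c) = a" if "(\<lambda>q. c q - a * z q) \<in> ?B" for c a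
    unfolding \<psi>_def using free that by (rule coset_coeff)
  have inj: "inj_on \<psi> (homology n m i j d)"
  proof
    fix X Y assume "X \<in> homology n m i j d" "Y \<in> homology n m i j d" and e: "\<psi> X = \<psi> Y"
    then obtain c c' where c: "c \<in> cycles n m i j d" "X = coset ?B c"
      and c': "c' \<in> cycles n m i j d" "Y = coset ?B c'" unfolding homology_def by blast
    obtain a a' where a: "(\<lambda>q. c q - a * z q) \<in> ?B" and a': "(\<lambda>q. c' q - a' * z q) \<in> ?B"
      using gen[OF c(1)] gen[OF c'(1)] by blast
    have "a = a'" using e c c' coeff[OF a] coeff[OF a'] by simp
    then show "X = Y" using c c' a a' by (simp add: coset_eq_iff[symmetric])
  qed
  have surj: "\<psi> ` homology n m i j d = UNIV"
  proof (rule set_eqI, rule iffI)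
    fix a :: 'k
    have "coset ?B (\<lambda>q. a * z q) \<in> homology n m i j d"
      unfolding homology_def using cycles_smult[OF z] by blast
    moreover have "\<psi> (coset ?B (\<lambda>q. a * z q)) = a" by (rule coeff) (simp add: boundaries_zero)
    ultimately show "a \<in> \<psi> ` homology n m i j d" by (metis image_eqI)
  qed auto
  have add: "\<psi> (coset ?B (\<lambda>q. c q + c' q)) = \<psi> (coset ?B c) + \<psi> (coset ?B c')"
    if c: "c \<in> cycles n m i j d" and c': "c' \<in> cycles n m i j d" for c c'
  proof -
    obtain a a' where a: "(\<lambda>q. c q - a * z q) \<in> ?B" and a': "(\<lambda>q. c' q - a' * z q) \<in> ?B"
      using gen[OF c] gen[OF c'] by blast
    have "(\<lambda>q. (c q + c' q) - (a + a') * z q) \<in> ?B"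
      using boundaries_add[OF a a'] by (simp add: algebra_simps)
    then show ?thesis using coeff[OF a] coeff[OF a'] coeff by simp
  qed
  have smult: "\<psi> (coset ?B (\<lambda>q. x * c q)) = x * \<psi> (coset ?B c)" if c: "c \<in> cycles n m i j d" for c x
  proof -
    obtain a where a: "(\<lambda>q. c q - a * z q) \<in> ?B" using gen[OF c] by blast
    have "(\<lambda>q. x * c q - (x * a) * z q) \<in> ?B"
      using boundaries_smult[OF a, of x] by (simp add: algebra_simps)
    then show ?thesis using coeff[OF a] coeff by simp
  qed
  show ?thesis unfolding homology_iso_def
    using inj surj add smult by (intro exI[where x=\<psi>]) (auto simp: bij_betw_def)
qed

section \<open>A contracting homotopy on the chains from \<open>z\<^sub>i\<close>\<close>

locale source_vertex =
  fixes n m i :: nat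
  assumes n_ge_3: "3 \<le> n" and m_ge_3: "3 \<le> m" and i_ge_1: "1 \<le> i" and i_le_m: "i \<le> m"
begin

abbreviation bd :: "(path \<Rightarrow> 'k::comm_ring_1) \<Rightarrow> path \<Rightarrow> 'k" where
  "bd c \<equiv> linext (dpath n m) c"

definition nxt :: nat where "nxt = (if i < m then i + 1 else 1)"

lemma nxt_ge_1: "1 \<le> nxt" and nxt_le_m: "nxt \<le> m" and nxt_neq: "nxt \<noteq> i"
  using m_ge_3 i_ge_1 i_le_m by (auto simp: nxt_def)

lemma between_i_nxt: "between m i nxt = {}"
  using m_ge_3 i_ge_1 i_le_m by (auto simp: nxt_def between_def)

lemma between_i_eq_insert:
  assumes "1 \<le> c" "c \<le> m" "c \<noteq> i" "c \<noteq> nxt"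
  shows "between m i c = insert nxt (between m nxt c)"
  using assms m_ge_3 i_ge_1 i_le_m unfolding nxt_def between_def by (auto split: if_splits)

lemma i_notin_between:
  assumes "1 \<le> c" "c \<le> m" "c \<noteq> i" "c \<noteq> nxt"
  shows "i \<notin> between m nxt c"
  using assms m_ge_3 i_ge_1 i_le_m unfolding nxt_def between_def by (auto split: if_splits)

definition htpy :: "path \<Rightarrow> path \<Rightarrow> 'k::comm_ring_1" where
  "htpy p = (case p of g # g' # r \<Rightarrow>
      if g = (i, nxt) \<and> fst g' = nxt \<and> snd g' \<noteq> i
      then (\<lambda>q. sgn1 (pdeg n r) * sgn1 (gdeg n (nxt, snd g')) * unit_chain ((i, snd g') # r) q)
      else (\<lambda>q. 0)
    | _ \<Rightarrow> (\<lambda>q. 0))"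

text \<open>\<open>r\<close> composed with the cycle \<open>b\<^sub>i\<^sub>',\<^sub>i b\<^sub>i\<^sub>,\<^sub>i\<^sub>' - \<Sum>\<^sub>y \<plusminus>b\<^sub>y\<^sub>,\<^sub>i b\<^sub>i\<^sub>,\<^sub>y\<close> of degree \<open>n - 2\<close> in
  \<open>Hom(z\<^sub>i, z\<^sub>i)\<close>, the sum running over the \<open>y\<close> cyclically between \<open>i'\<close> and \<open>i\<close>.\<close>
definition wrap_path :: "path \<Rightarrow> path \<Rightarrow> 'k::comm_ring_1" where
  "wrap_path r = (\<lambda>q. unit_chain ((i, nxt) # (nxt, i) # r) q -
      (\<Sum>y\<in>between m nxt i. sgn1 (gdeg n (nxt, y)) * unit_chain ((i, y) # (y, i) # r) q))"

definition retract_path :: "path \<Rightarrow> path \<Rightarrow> 'k::comm_ring_1" where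
  "retract_path p = (\<lambda>q. (if p = [] \<or> p = [(i, nxt)] then unit_chain p q else 0) +
      (case p of x # y # r \<Rightarrow> if x = (i, nxt) \<and> y = (nxt, i) then wrap_path r q else 0 | _ \<Rightarrow> 0))"

abbreviation dh_plus_hd :: "path \<Rightarrow> path \<Rightarrow> 'k::comm_ring_1" where
  "dh_plus_hd p \<equiv> (\<lambda>q. bd (htpy p) q + linext htpy (dpath n m p) q)"

lemma finsupp_htpy[simp]: "finsupp (htpy p)"
  unfolding htpy_def by (auto split: list.splits simp: mult.assoc finsupp_smult)

lemma htpy_Cons_not_nxt: "fst g = i \<Longrightarrow> snd g \<noteq> nxt \<Longrightarrow> htpy (g # r) = (\<lambda>q. 0)"
  unfolding htpy_def by (cases g; cases r) auto

lemma htpy_identity_Cons_other: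
  assumes c: "1 \<le> c" "c \<le> m" "c \<noteq> i" "c \<noteq> nxt"
  shows "dh_plus_hd ((i,c) # r)
       = (\<lambda>q. unit_chain ((i,c) # r) q - (retract_path ((i,c) # r) q :: 'k::comm_ring_1))"
proof
  fix q
  have h0: "htpy ((i,c) # r) = (\<lambda>q. 0 :: 'k)" using c by (simp add: htpy_Cons_not_nxt)
  have p0: "retract_path ((i,c) # r) q = (0 :: 'k)" using c
    by (cases r) (auto simp: retract_path_def)
  have l1: "linext (\<lambda>r. htpy ((i,c) # r)) (dpath n m r) = (\<lambda>q. 0 :: 'k)"
    using c by (simp add: htpy_Cons_not_nxt)
  have s: "(\<Sum>x\<in>between m i c. sgn1 (gdeg n (x, c)) * htpy ((i, x) # (x, c) # r) q)
      = sgn1 (gdeg n (nxt, c)) * (htpy ((i, nxt) # (nxt, c) # r) q :: 'k)"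
  proof -
    have "(\<Sum>x\<in>between m i c. sgn1 (gdeg n (x, c)) * htpy ((i, x) # (x, c) # r) q)
        = (\<Sum>x\<in>insert nxt (between m nxt c). sgn1 (gdeg n (x, c)) * (htpy ((i, x) # (x, c) # r) q :: 'k))"
      using between_i_eq_insert[OF c] by simp
    also have "\<dots> = sgn1 (gdeg n (nxt, c)) * htpy ((i, nxt) # (nxt, c) # r) q"
      using between_neq[of nxt m nxt c]
      by (subst sum.insert) (auto intro!: sum.neutral simp: htpy_def dest: between_neq)
    finally show ?thesis .
  qed
  have hv: "htpy ((i, nxt) # (nxt, c) # r) q = sgn1 (pdeg n r) * sgn1 (gdeg n (nxt, c)) * (unit_chain ((i, c) # r) q :: 'k)"
    using c by (simp add: htpy_def)
  show "bd (htpy ((i,c) # r)) q + linext htpy (dpath n m ((i,c) # r)) q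
       = unit_chain ((i,c) # r) q - (retract_path ((i,c) # r) q :: 'k)"
    unfolding h0 linext_zero linext_dpath_Cons l1 linext_dgen_chain p0
    using s hv by (simp add: sgn1_mult_left sgn1_mult mult.assoc[symmetric] sgn1_even)
qed

lemma htpy_identity_Nil: "dh_plus_hd []
       = (\<lambda>q. unit_chain [] q - (retract_path [] q :: 'k::comm_ring_1))"
  by (simp add: htpy_def retract_path_def)

lemma htpy_identity_edge: "dh_plus_hd [(i,nxt)]
       = (\<lambda>q. unit_chain [(i,nxt)] q - (retract_path [(i,nxt)] q :: 'k::comm_ring_1))"
  by (simp add: htpy_def retract_path_def linext_dpath_Cons linext_dgen_chain between_i_nxt)

lemma htpy_identity_loop:
  "dh_plus_hd ((i,nxt) # (nxt,i) # r)
       = (\<lambda>q. unit_chain ((i,nxt) # (nxt,i) # r) q - (retract_path ((i,nxt) # (nxt,i) # r) q :: 'k::comm_ring_1))"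
proof
  fix q
  have h0: "htpy ((i,nxt) # (nxt,i) # r) = (\<lambda>q. 0 :: 'k)" by (simp add: htpy_def)
  have l0: "linext (\<lambda>r'. htpy ((i, nxt) # (nxt, i) # r')) (dpath n m r) = (\<lambda>q. 0 :: 'k)"
    by (simp add: htpy_def)
  have hv: "y \<in> between m nxt i \<Longrightarrow> htpy ((i, nxt) # (nxt, y) # (y, i) # r) q =
      sgn1 (gdeg n (y, i) + pdeg n r) * sgn1 (gdeg n (nxt, y)) * (unit_chain ((i, y) # (y, i) # r) q :: 'k)" for y
    by (auto simp: htpy_def dest: between_neq)
  have co: "sgn1 (pdeg n r) * (sgn1 (gdeg n (y, i)) *
      (sgn1 (gdeg n (y, i) + pdeg n r) * sgn1 (gdeg n (nxt, y)) * (X :: 'k)))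
      = sgn1 (gdeg n (nxt, y)) * X" for y X
    by (simp add: sgn1_mult sgn1_mult_left mult.assoc[symmetric]) (rule arg_cong[where f="\<lambda>z. z * X"], rule sgn1_add_even[where k = "pdeg n r + gdeg n (y,i)"], simp)
  have "linext htpy (dpath n m ((i,nxt) # (nxt,i) # r)) q =
     (\<Sum>y\<in>between m nxt i. sgn1 (gdeg n (nxt, y)) * (unit_chain ((i, y) # (y, i) # r) q :: 'k))"
    unfolding linext_dpath_Cons linext_dgen_chain l0 using between_i_nxt
    by (simp add: hv sum_distrib_left co cong: sum.cong)
  then show "bd (htpy ((i,nxt) # (nxt,i) # r)) q + linext htpy (dpath n m ((i,nxt) # (nxt,i) # r)) q
       = unit_chain ((i,nxt) # (nxt,i) # r) q - (retract_path ((i,nxt) # (nxt,i) # r) q :: 'k)"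
    unfolding h0 by (simp add: retract_path_def wrap_path_def)
qed

lemma dgen_chain_i_other:
  assumes c: "1 \<le> c" "c \<le> m" "c \<noteq> i" "c \<noteq> nxt"
  shows "dgen_chain n m (i,c) r q = sgn1 (gdeg n (nxt, c)) * unit_chain ((i,nxt) # (nxt,c) # r) q
      + (\<Sum>y\<in>between m nxt c. sgn1 (gdeg n (y, c)) * (unit_chain ((i, y) # (y, c) # r) q :: 'k::comm_ring_1))"
proof -
  have "nxt \<notin> between m nxt c" using between_neq by blast
  then show ?thesis unfolding dgen_chain_def using between_i_eq_insert[OF c] by simp
qed

lemma linext_htpy_nxt_Cons_dpath:
  assumes "c \<noteq> i"
  shows "linext (\<lambda>r'. htpy ((i,nxt) # (nxt,c) # r')) (dpath n m r) =
    (\<lambda>q. - (sgn1 (pdeg n r) * sgn1 (gdeg n (nxt, c))) * cons_chain (i,c) (dpath n m r) q :: 'k::comm_ring_1)"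
proof -
  have "linext (\<lambda>r'. htpy ((i,nxt) # (nxt,c) # r')) (dpath n m r) =
      linext (\<lambda>r' q. - (sgn1 (pdeg n r) * sgn1 (gdeg n (nxt, c))) * (unit_chain ((i,c) # r') q :: 'k))
        (dpath n m r)"
  proof (rule linext_cong)
    fix r' assume "(dpath n m r r' :: 'k) \<noteq> 0"
    then have "pdeg n r' = pdeg n r - 1" by (rule pdeg_dpath)
    then show "htpy ((i,nxt) # (nxt,c) # r') =
        (\<lambda>q. - (sgn1 (pdeg n r) * sgn1 (gdeg n (nxt, c))) * (unit_chain ((i,c) # r') q :: 'k))"
      using assms by (simp add: htpy_def sgn1_minus_1)
  qed
  also have "\<dots> = (\<lambda>q. - (sgn1 (pdeg n r) * sgn1 (gdeg n (nxt, c))) * cons_chain (i,c) (dpath n m r) q)"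
    by (subst linext_smult_fun, subst linext_unit_chain_Cons) simp_all
  finally show ?thesis .
qed

lemma htpy_identity_nxt_other:
  assumes c: "1 \<le> c" "c \<le> m" "c \<noteq> i" "c \<noteq> nxt"
  shows "dh_plus_hd ((i,nxt) # (nxt,c) # r)
       = (\<lambda>q. unit_chain ((i,nxt) # (nxt,c) # r) q - (retract_path ((i,nxt) # (nxt,c) # r) q :: 'k::comm_ring_1))"
proof
  fix q
  let ?s = "sgn1 (pdeg n r) :: 'k"
  define S :: 'k where "S = ?s * sgn1 (gdeg n (nxt, c))"
  define P :: 'k where "P = cons_chain (i,c) (dpath n m r) q"
  define A where "A = (\<lambda>y. sgn1 (gdeg n (y, c)) * (unit_chain ((i, y) # (y, c) # r) q :: 'k))"
  define B where "B = (\<lambda>y. sgn1 (gdeg n (y, c)) * (sgn1 (gdeg n (y, c) + pdeg n r) * sgn1 (gdeg n (nxt, y))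
       * (unit_chain ((i, y) # (y, c) # r) q :: 'k)))"
  have htpy_val: "y \<in> between m nxt c \<Longrightarrow> htpy ((i, nxt) # (nxt, y) # (y, c) # r) q =
      sgn1 (gdeg n (y, c) + pdeg n r) * sgn1 (gdeg n (nxt, y)) * (unit_chain ((i, y) # (y, c) # r) q :: 'k)" for y
    using i_notin_between[OF c] by (auto simp: htpy_def)
  have dh: "bd (htpy ((i,nxt) # (nxt,c) # r)) q = S * (?s * dgen_chain n m (i,c) r q + P)"
    using c by (simp add: htpy_def S_def linext_smult dpath_Cons P_def)
  have hd: "linext htpy (dpath n m ((i,nxt) # (nxt,c) # r)) q = ?s * (\<Sum>y\<in>between m nxt c. B y) - S * P"
    unfolding linext_dpath_Cons linext_dgen_chain linext_htpy_nxt_Cons_dpath[OF c(3)] using between_i_nxt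
    by (simp add: htpy_val B_def P_def S_def mult.assoc cong: sum.cong)
  have one: "S * (?s * sgn1 (gdeg n (nxt, c))) = 1"
    unfolding S_def by (simp add: sgn1_mult sgn1_mult_left mult.assoc[symmetric] sgn1_even)
  have cancel: "S * (?s * A y) + ?s * B y = 0" if y: "y \<in> between m nxt c" for y
  proof -
    have "gdeg n (nxt, c) = gdeg n (nxt, y) + gdeg n (y, c) + 1" using gdeg_between[OF y] .
    then show ?thesis unfolding S_def A_def B_def
      by (simp add: sgn1_mult sgn1_mult_left mult.assoc[symmetric]) (simp add: sgn1_def)
  qed
  have "S * (?s * (\<Sum>y\<in>between m nxt c. A y)) + ?s * (\<Sum>y\<in>between m nxt c. B y)
      = (\<Sum>y\<in>between m nxt c. S * (?s * A y) + ?s * B y)"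
    by (simp add: sum_distrib_left sum.distrib)
  also have "\<dots> = 0" using cancel by (simp add: sum.neutral)
  finally have sums: "S * (?s * (\<Sum>y\<in>between m nxt c. A y)) + ?s * (\<Sum>y\<in>between m nxt c. B y) = 0" .
  have "bd (htpy ((i,nxt) # (nxt,c) # r)) q + linext htpy (dpath n m ((i,nxt) # (nxt,c) # r)) q
      = S * (?s * sgn1 (gdeg n (nxt, c))) * unit_chain ((i,nxt) # (nxt,c) # r) q
        + (S * (?s * (\<Sum>y\<in>between m nxt c. A y)) + ?s * (\<Sum>y\<in>between m nxt c. B y))"
    unfolding dh hd dgen_chain_i_other[OF c] A_def by (simp add: algebra_simps)
  also have "\<dots> = unit_chain ((i,nxt) # (nxt,c) # r) q" by (simp only: one sums) simp
  finally show "bd (htpy ((i,nxt) # (nxt,c) # r)) q + linext htpy (dpath n m ((i,nxt) # (nxt,c) # r)) q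
      = unit_chain ((i,nxt) # (nxt,c) # r) q - (retract_path ((i,nxt) # (nxt,c) # r) q :: 'k)"
    using c by (simp add: retract_path_def)
qed

definition unwrap :: "(path \<Rightarrow> 'k::comm_ring_1) \<Rightarrow> path \<Rightarrow> 'k" where
  "unwrap c = (\<lambda>r. c ((i,nxt) # (nxt,i) # r))"

definition wrap :: "(path \<Rightarrow> 'k::comm_ring_1) \<Rightarrow> path \<Rightarrow> 'k" where
  "wrap y = linext wrap_path y"

definition low_part :: "(path \<Rightarrow> 'k::comm_ring_1) \<Rightarrow> path \<Rightarrow> 'k" where
  "low_part c = (\<lambda>q. if q = [] \<or> q = [(i,nxt)] then c q else 0)"

definition retract :: "(path \<Rightarrow> 'k::comm_ring_1) \<Rightarrow> path \<Rightarrow> 'k" where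
  "retract c = (\<lambda>q. low_part c q + wrap (unwrap c) q)"

lemma finsupp_wrap_path[simp]: "finsupp (wrap_path r)"
  unfolding wrap_path_def by (intro finsupp_diff finsupp_sum) auto

lemma finsupp_retract_path[simp]: "finsupp (retract_path p)"
proof -
  have f1: "finsupp (\<lambda>q. if p = [] \<or> p = [(i, nxt)] then unit_chain p q else (0::'k::comm_ring_1))"
    by (cases "p = [] \<or> p = [(i, nxt)]") auto
  have f2: "finsupp (\<lambda>q. case p of x # y # r \<Rightarrow> if x = (i, nxt) \<and> y = (nxt, i) then wrap_path r q else (0::'k::comm_ring_1) | _ \<Rightarrow> 0)"
  proof (cases p)
    case Nil then show ?thesis by simp
  next
    case (Cons x p')
    then show ?thesis
    proof (cases p')
      case Nil then show ?thesis using Cons by simp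
    next
      case (Cons y r)
      then show ?thesis using \<open>p = x # p'\<close> by (cases "x = (i, nxt) \<and> y = (nxt, i)") auto
    qed
  qed
  show ?thesis unfolding retract_path_def by (rule finsupp_add[OF f1 f2])
qed

lemma finsupp_unwrap: "finsupp c \<Longrightarrow> finsupp (unwrap c)"
proof -
  assume "finsupp c"
  have "supp (unwrap c) \<subseteq> (\<lambda>p. drop 2 p) ` supp c"
    by (auto simp: supp_def unwrap_def image_iff intro!: exI[where x="_ # _ # _"])
  then show ?thesis using \<open>finsupp c\<close> by (auto simp: finsupp_def intro: finite_subset)
qed

lemma finsupp_wrap: "finsupp y \<Longrightarrow> finsupp (wrap y)"
  unfolding wrap_def by (rule finsupp_linext) auto

lemma linext_retract_path: "finsupp c \<Longrightarrow> linext retract_path c = retract c"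
  unfolding retract_path_def retract_def low_part_def wrap_def unwrap_def
  by (simp add: linext_add_fun linext_restrict linext_Cons2)

definition from_i :: "(path \<Rightarrow> 'k::comm_ring_1) \<Rightarrow> bool" where
  "from_i c \<longleftrightarrow> (\<forall>p. c p \<noteq> 0 \<longrightarrow> valid_from m i p)"

lemma htpy_identity_path:
  assumes "valid_from m i p"
  shows "dh_plus_hd p = (\<lambda>q. unit_chain p q - (retract_path p q :: 'k::comm_ring_1))"
proof (cases p)
  case Nil then show ?thesis using htpy_identity_Nil by simp
next
  case (Cons g r)
  obtain c where g: "g = (i,c)" using assms Cons by (cases g) auto
  have c: "1 \<le> c" "c \<le> m" "c \<noteq> i" "valid_from m c r" using assms Cons g by auto
  show ?thesis
  proof (cases "c = nxt")
    case False
    then show ?thesis using htpy_identity_Cons_other[OF c(1-3) False] Cons g by simp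
  next
    case True
    show ?thesis
    proof (cases r)
      case Nil then show ?thesis using htpy_identity_edge Cons g True by simp
    next
      case (Cons g' r')
      obtain c' where g': "g' = (nxt, c')" using c(4) Cons True by (cases g') auto
      have c': "1 \<le> c'" "c' \<le> m" "c' \<noteq> nxt" using c(4) Cons g' True by auto
      show ?thesis
      proof (cases "c' = i")
        case True
        then show ?thesis using htpy_identity_loop \<open>p = g # r\<close> g \<open>c = nxt\<close> Cons g' by simp
      next
        case False
        then show ?thesis using htpy_identity_nxt_other[OF c'(1,2) False c'(3)] \<open>p = g # r\<close> g \<open>c = nxt\<close> Cons g' by simp
      qed
    qed
  qed
qed

lemma gdeg_i_nxt_loop: "gdeg n (i, nxt) + gdeg n (nxt, i) = int n - 2"
  using gdeg_loop nxt_neq by metis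

lemma valid_from_htpy:
  assumes "valid_from m i p" "(htpy p q :: 'k::comm_ring_1) \<noteq> 0"
  shows "valid_from m i q \<and> target i q = target i p \<and> pdeg n q = pdeg n p + 1"
proof -
  obtain c r where p: "p = (i,nxt) # (nxt,c) # r" and cq: "q = (i,c) # r" and ci: "c \<noteq> i"
    using assms(2) unfolding htpy_def unit_chain_def
    by (auto split: list.splits if_splits)
  have v: "1 \<le> c" "c \<le> m" "c \<noteq> nxt" "valid_from m c r" using assms(1) p by auto
  have "nxt \<in> between m i c" using between_i_eq_insert[OF v(1,2) ci v(3)] by simp
  from gdeg_between[OF this, of n] show ?thesis using p cq v ci i_ge_1 i_le_m by auto
qed

lemma valid_from_retract_path:
  assumes "valid_from m i p" "(retract_path p q :: 'k::comm_ring_1) \<noteq> 0"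
  shows "valid_from m i q \<and> target i q = target i p \<and> pdeg n q = pdeg n p"
proof (cases "p = [] \<or> p = [(i,nxt)]")
  case True
  then have "q = p" using assms(2) by (auto simp: retract_path_def unit_chain_def split: if_splits)
  then show ?thesis using assms(1) by simp
next
  case False
  then obtain r where p: "p = (i,nxt) # (nxt,i) # r" and w: "(wrap_path r q :: 'k) \<noteq> 0"
    using assms(2) unfolding retract_path_def by (auto split: list.splits if_splits)
  have vr: "valid_from m i r" using assms(1) p by auto
  have "q = (i,nxt) # (nxt,i) # r \<or> (\<exists>y\<in>between m nxt i. q = (i,y) # (y,i) # r)"
  proof (rule ccontr)
    assume "\<not> ?thesis"
    then have "(wrap_path r q :: 'k) = 0" unfolding wrap_path_def unit_chain_def by (auto intro!: sum.neutral)
    with w show False by simp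
  qed
  then show ?thesis
  proof
    assume "q = (i,nxt) # (nxt,i) # r"
    then show ?thesis using p assms(1) by simp
  next
    assume "\<exists>y\<in>between m nxt i. q = (i,y) # (y,i) # r"
    then obtain y where y: "y \<in> between m nxt i" "q = (i,y) # (y,i) # r" by blast
    have "1 \<le> y \<and> y \<le> m" using between_range[OF i_le_m y(1)] .
    moreover have "y \<noteq> i" using between_neq[OF y(1)] by simp
    moreover have "gdeg n (i,y) + gdeg n (y,i) = int n - 2" using gdeg_loop \<open>y \<noteq> i\<close> by metis
    ultimately show ?thesis using y p vr i_ge_1 i_le_m gdeg_i_nxt_loop nxt_ge_1 nxt_le_m nxt_neq by auto
  qed
qed

lemma from_i_linext:
  assumes "finsupp c" "from_i c" "\<And>p. finsupp (f p)" "\<And>p q. valid_from m i p \<Longrightarrow> f p q \<noteq> 0 \<Longrightarrow> valid_from m i q"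
  shows "from_i (linext f c)"
  unfolding from_i_def
proof (intro allI impI)
  fix q assume "linext f c q \<noteq> 0"
  then have "q \<in> supp (linext f c)" by (simp add: supp_def)
  then have "q \<in> (\<Union>p\<in>supp c. supp (f p))" using supp_linext by blast
  then obtain p where p: "c p \<noteq> 0" "f p q \<noteq> 0" by (auto simp: supp_def)
  have "valid_from m i p" using assms(2) p(1) by (simp add: from_i_def)
  then show "valid_from m i q" using assms(4) p(2) by blast
qed

lemma from_i_htpy: "finsupp c \<Longrightarrow> from_i c \<Longrightarrow> from_i (linext htpy c)"
  by (rule from_i_linext) (auto dest: valid_from_htpy)

lemma from_i_bd: "finsupp c \<Longrightarrow> from_i c \<Longrightarrow> from_i (bd c)"
  by (rule from_i_linext) (auto dest: valid_from_dpath)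

lemma bd_bd: "finsupp c \<Longrightarrow> from_i c \<Longrightarrow> bd (bd c) = (\<lambda>q. 0 :: 'k::comm_ring_1)"
proof -
  assume f: "finsupp c" and v: "from_i c"
  have "bd (bd c) = linext (\<lambda>p. bd (dpath n m p)) c"
    by (rule linext_linext[OF f]) simp
  also have "\<dots> = linext (\<lambda>p q. 0) c"
  proof (rule linext_cong)
    fix p assume "(c p :: 'k) \<noteq> 0"
    then have "valid_from m i p" using v by (simp add: from_i_def)
    then show "bd (dpath n m p) = (\<lambda>q. 0 :: 'k)" by (rule linext_dpath_dpath)
  qed
  finally show ?thesis by simp
qed

lemma htpy_identity:
  assumes f: "finsupp c" and v: "from_i c"
  shows "retract c = (\<lambda>q. c q - (bd (linext htpy c) q + linext htpy (bd c) q) :: 'k::comm_ring_1)"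
proof -
  have "(\<lambda>q. bd (linext htpy c) q + linext htpy (bd c) q)
      = (\<lambda>q. linext (\<lambda>p. bd (htpy p)) c q + linext (\<lambda>p. linext htpy (dpath n m p)) c q)"
    by (simp add: linext_linext[OF f])
  also have "\<dots> = linext (\<lambda>p q. bd (htpy p) q + linext htpy (dpath n m p) q) c"
    by (simp add: linext_add_fun)
  also have "\<dots> = linext (\<lambda>p q. unit_chain p q - retract_path p q) c"
  proof (rule linext_cong)
    fix p assume "(c p :: 'k) \<noteq> 0"
    then have "valid_from m i p" using v by (simp add: from_i_def)
    then show "dh_plus_hd p = (\<lambda>q. unit_chain p q - (retract_path p q :: 'k))"
      by (rule htpy_identity_path)
  qed
  also have "\<dots> = (\<lambda>q. c q - retract c q)"
    by (simp add: linext_diff_fun linext_unit_chain_id[OF f] linext_retract_path[OF f])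
  finally show ?thesis by (simp add: fun_eq_iff algebra_simps)
qed

lemma finsupp_bd: "finsupp c \<Longrightarrow> finsupp (bd c)"
  by (rule finsupp_linext) auto

lemma finsupp_linext_htpy: "finsupp c \<Longrightarrow> finsupp (linext htpy c)"
  by (rule finsupp_linext) auto

lemma bd_retract:
  assumes f: "finsupp c" and v: "from_i c"
  shows "bd (retract c) = retract (bd c :: path \<Rightarrow> 'k::comm_ring_1)"
proof -
  have fX: "finsupp (bd (linext htpy c))" by (simp add: finsupp_bd finsupp_linext_htpy f)
  have fY: "finsupp (linext htpy (bd c))" by (simp add: finsupp_bd finsupp_linext_htpy f)
  have Z1: "bd (bd (linext htpy c)) = (\<lambda>q. 0)"
    by (rule bd_bd) (simp_all add: finsupp_linext_htpy f from_i_htpy v)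
  have Z2: "bd (bd c) = (\<lambda>q. 0)" by (rule bd_bd[OF f v])
  have "bd (retract c) = bd (\<lambda>q. c q - (bd (linext htpy c) q + linext htpy (bd c) q))"
    by (simp add: htpy_identity[OF f v])
  also have "\<dots> = (\<lambda>q. bd c q - (bd (bd (linext htpy c)) q + bd (linext htpy (bd c)) q))"
    by (simp add: linext_diff linext_add f fX fY finsupp_add)
  also have "\<dots> = (\<lambda>q. bd c q - bd (linext htpy (bd c)) q)" by (simp add: Z1)
  also have "\<dots> = retract (bd c)"
    by (simp add: htpy_identity finsupp_bd f from_i_bd v Z2)
  finally show ?thesis .
qed

lemma unwrap_wrap: "finsupp y \<Longrightarrow> unwrap (wrap y) = (y :: path \<Rightarrow> 'k::comm_ring_1)"
proof
  fix r assume f: "finsupp y"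
  have w: "wrap_path r' ((i,nxt) # (nxt,i) # r) = (unit_chain r' r :: 'k)" for r'
  proof -
    have "(\<Sum>x\<in>between m nxt i. sgn1 (gdeg n (nxt, x)) * unit_chain ((i, x) # (x, i) # r') ((i,nxt) # (nxt,i) # r)) = (0::'k)"
      by (rule sum.neutral) (auto simp: unit_chain_def dest: between_neq)
    then show ?thesis by (simp add: wrap_path_def unit_chain_def)
  qed
  have "unwrap (wrap y) r = linext unit_chain y r" by (simp add: unwrap_def wrap_def linext_def w)
  then show "unwrap (wrap y) r = y r" by (simp add: linext_unit_chain_id[OF f])
qed

lemma retract_loop: "finsupp y \<Longrightarrow> retract (cons_chain (i,nxt) (cons_chain (nxt,i) y)) = wrap (y :: path \<Rightarrow> 'k::comm_ring_1)"
proof -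
  assume f: "finsupp y"
  have s: "unwrap (cons_chain (i,nxt) (cons_chain (nxt,i) y)) = y" by (simp add: unwrap_def cons_chain_def fun_eq_iff)
  have g0: "cons_chain (i,nxt) (cons_chain (nxt,i) y) [] = 0" "cons_chain (i,nxt) (cons_chain (nxt,i) y) [(i,nxt)] = 0"
    by (simp_all add: cons_chain_def)
  show ?thesis by (rule ext) (auto simp: retract_def low_part_def s g0)
qed

lemma from_i_loop: "from_i y \<Longrightarrow> from_i (cons_chain (i,nxt) (cons_chain (nxt,i) y))"
  unfolding from_i_def cons_chain_def using i_ge_1 i_le_m nxt_ge_1 nxt_le_m nxt_neq
  by (auto split: list.splits if_splits)

lemma wrap_add: "finsupp a \<Longrightarrow> finsupp b \<Longrightarrow> wrap (\<lambda>q. a q + b q) = (\<lambda>q. wrap a q + wrap b q)"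
  by (simp add: wrap_def linext_add)

lemma wrap_smult: "finsupp a \<Longrightarrow> wrap (\<lambda>q. c * a q) = (\<lambda>q. c * wrap a q)"
  by (simp add: wrap_def linext_smult)

lemma wrap_zero[simp]: "wrap (\<lambda>q. 0) = (\<lambda>q. 0)"
  by (simp add: wrap_def)

lemma retract_add: "finsupp a \<Longrightarrow> finsupp b \<Longrightarrow> retract (\<lambda>q. a q + b q) = (\<lambda>q. retract a q + retract b q)"
proof -
  assume fa: "finsupp a" and fb: "finsupp b"
  have s: "unwrap (\<lambda>q. a q + b q) = (\<lambda>q. unwrap a q + unwrap b q)" by (simp add: unwrap_def)
  show ?thesis by (rule ext) (simp add: retract_def low_part_def s wrap_add finsupp_unwrap fa fb)
qed

lemma bd_loop:
  assumes f: "finsupp y"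
  shows "bd (cons_chain (i,nxt) (cons_chain (nxt,i) y)) =
    (\<lambda>q. cons_chain (i,nxt) (linext (\<lambda>r q. sgn1 (pdeg n r) * dgen_chain n m (nxt,i) r q) y) q
         + cons_chain (i,nxt) (cons_chain (nxt,i) (bd y)) q :: 'k::comm_ring_1)"
proof -
  have sp0: "dgen_chain n m (i,nxt) r = (\<lambda>q. 0 :: 'k)" for r by (simp add: dgen_chain_def between_i_nxt fun_eq_iff)
  have e: "dpath n m ((i,nxt) # (nxt,i) # r) = (\<lambda>q. cons_chain (i,nxt) (\<lambda>q. sgn1 (pdeg n r) * dgen_chain n m (nxt,i) r q) q
         + cons_chain (i,nxt) (cons_chain (nxt,i) (dpath n m r)) q :: 'k)" for r
    by (simp add: dpath_Cons sp0 cons_chain_add)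
  have "bd (cons_chain (i,nxt) (cons_chain (nxt,i) y)) = linext (\<lambda>r. dpath n m ((i,nxt) # (nxt,i) # r)) y"
    by (simp add: linext_cons_chain finsupp_cons_chain f)
  also have "\<dots> = (\<lambda>q. linext (\<lambda>r. cons_chain (i,nxt) (\<lambda>q. sgn1 (pdeg n r) * dgen_chain n m (nxt,i) r q)) y q
       + linext (\<lambda>r. cons_chain (i,nxt) (cons_chain (nxt,i) (dpath n m r))) y q)"
    by (simp only: e linext_add_fun)
  also have "\<dots> = (\<lambda>q. cons_chain (i,nxt) (linext (\<lambda>r q. sgn1 (pdeg n r) * dgen_chain n m (nxt,i) r q) y) q
         + cons_chain (i,nxt) (cons_chain (nxt,i) (bd y)) q)"
    by (simp only: linext_cons_chain_out)
  finally show ?thesis .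
qed

lemma retract_loop_dgen:
  assumes f: "finsupp y"
  shows "retract (cons_chain (i,nxt) (linext (\<lambda>r q. sgn1 (pdeg n r) * dgen_chain n m (nxt,i) r q) y)) = (\<lambda>q. 0 :: 'k::comm_ring_1)"
proof -
  let ?X = "linext (\<lambda>r q. sgn1 (pdeg n r) * dgen_chain n m (nxt,i) r q) y :: path \<Rightarrow> 'k"
  have X0: "?X [] = 0" by (simp add: linext_def dgen_chain_def unit_chain_def)
  have X1: "?X ((nxt,i) # r) = 0" for r
  proof -
    have "dgen_chain n m (nxt,i) r' ((nxt,i) # r) = (0::'k)" for r'
      by (auto simp: dgen_chain_def unit_chain_def intro!: sum.neutral dest: between_neq)
    then show ?thesis by (simp add: linext_def)
  qed
  have s: "unwrap (cons_chain (i,nxt) ?X) = (\<lambda>q. 0)" by (simp add: unwrap_def cons_chain_def X1 fun_eq_iff)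
  have g0: "cons_chain (i,nxt) ?X [] = 0" "cons_chain (i,nxt) ?X [(i,nxt)] = 0"
    by (simp_all add: cons_chain_def X0)
  show ?thesis by (rule ext) (auto simp: retract_def low_part_def s g0)
qed

lemma finsupp_loop_dgen: "finsupp y \<Longrightarrow> finsupp (linext (\<lambda>r q. sgn1 (pdeg n r) * dgen_chain n m (nxt,i) r q) y :: path \<Rightarrow> 'k::comm_ring_1)"
  by (rule finsupp_linext) (auto intro: finsupp_smult)

text \<open>\<open>W y\<close> is the retraction of \<open>y\<close> precomposed with the loop; the retraction commutes with
  \<open>d\<close> by the homotopy formula and kills the terms of \<open>d\<close> in which the loop is differentiated.\<close>
lemma bd_wrap:
  assumes f: "finsupp y" and v: "from_i y"
  shows "bd (wrap y) = wrap (bd y :: path \<Rightarrow> 'k::comm_ring_1)"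
proof -
  have fG: "finsupp (cons_chain (i,nxt) (cons_chain (nxt,i) y))" by (simp add: finsupp_cons_chain f)
  have "bd (wrap y) = bd (retract (cons_chain (i,nxt) (cons_chain (nxt,i) y)))" by (simp add: retract_loop f)
  also have "\<dots> = retract (bd (cons_chain (i,nxt) (cons_chain (nxt,i) y)))" by (rule bd_retract[OF fG from_i_loop[OF v]])
  also have "\<dots> = wrap (bd y)"
    by (simp add: bd_loop f retract_add finsupp_cons_chain finsupp_loop_dgen finsupp_bd retract_loop_dgen retract_loop)
  finally show ?thesis .
qed

lemma unwrap_retract: "finsupp c \<Longrightarrow> unwrap (retract c) = unwrap (c :: path \<Rightarrow> 'k::comm_ring_1)"
proof -
  assume f: "finsupp c"
  have "unwrap (retract c) = unwrap (wrap (unwrap c))" by (simp add: unwrap_def retract_def low_part_def fun_eq_iff)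
  then show ?thesis by (simp add: unwrap_wrap finsupp_unwrap f)
qed

lemma from_i_unwrap: "from_i c \<Longrightarrow> from_i (unwrap c)"
  unfolding from_i_def unwrap_def by auto

lemma dpath_edge: "dpath n m [(i,nxt)] = (\<lambda>q. 0 :: 'k::comm_ring_1)"
  by (simp add: dpath_Cons dgen_chain_def between_i_nxt fun_eq_iff)

text \<open>Unwrapping factors through the retraction, whose low part is killed by \<open>d\<close>.\<close>
lemma unwrap_bd:
  assumes f: "finsupp b" and v: "from_i b"
  shows "unwrap (bd b) = bd (unwrap b :: path \<Rightarrow> 'k::comm_ring_1)"
proof -
  define low where "low = low_part b"
  have low_eq: "low = (\<lambda>q. b [] * unit_chain [] q + b [(i,nxt)] * unit_chain [(i,nxt)] q)"
    by (auto simp: low_def low_part_def unit_chain_def fun_eq_iff)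
  have finsupp_low: "finsupp low" unfolding low_eq by (intro finsupp_add finsupp_smult) auto
  have bd_low: "bd low = (\<lambda>q. 0)"
    unfolding low_eq by (simp add: linext_add linext_smult finsupp_smult dpath_edge)
  have retract_b: "retract b = (\<lambda>q. low q + wrap (unwrap b) q)" by (simp add: retract_def low_def)
  have "unwrap (bd b) = unwrap (retract (bd b))" by (simp add: unwrap_retract finsupp_bd f)
  also have "\<dots> = unwrap (bd (retract b))" by (simp add: bd_retract f v)
  also have "\<dots> = unwrap (\<lambda>q. bd low q + bd (wrap (unwrap b)) q)"
    by (simp add: retract_b linext_add finsupp_low finsupp_wrap finsupp_unwrap f)
  also have "\<dots> = unwrap (wrap (bd (unwrap b)))"
    by (simp add: bd_low bd_wrap finsupp_unwrap f from_i_unwrap v)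
  also have "\<dots> = bd (unwrap b)" by (simp add: unwrap_wrap finsupp_bd finsupp_unwrap f)
  finally show ?thesis .
qed

end

section \<open>Classification of the cycles\<close>

lemma nat_multiple_step:
  fixes x N :: int
  assumes "N > 0" "x \<noteq> 0"
  shows "(\<exists>k::nat. x = int k * N) \<longleftrightarrow> (\<exists>k::nat. x - N = int k * N)"
proof
  assume "\<exists>k::nat. x = int k * N"
  then obtain k :: nat where k: "x = int k * N" by blast
  with assms have "k \<noteq> 0" by auto
  with k have "x - N = int (k - 1) * N" by (simp add: of_nat_diff algebra_simps)
  then show "\<exists>k::nat. x - N = int k * N" by blast
next
  assume "\<exists>k::nat. x - N = int k * N"
  then obtain k :: nat where "x - N = int k * N" by blast
  then have "x = int (Suc k) * N" by (simp add: algebra_simps)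
  then show "\<exists>k::nat. x = int k * N" by blast
qed

lemma nat_div_multiple_step:
  fixes x N :: int
  assumes "N > 0" "x - N = int k * N"
  shows "nat (x div N) = Suc (nat ((x - N) div N))"
proof -
  have "x = int (Suc k) * N" using assms(2) by (simp add: algebra_simps)
  with assms show ?thesis by simp
qed

context source_vertex
begin

definition homog :: "nat \<Rightarrow> int \<Rightarrow> (path \<Rightarrow> 'k::comm_ring_1) \<Rightarrow> bool" where
  "homog j d c \<longleftrightarrow> finsupp c \<and> (\<forall>p. c p \<noteq> 0 \<longrightarrow> valid_from m i p \<and> target i p = j \<and> pdeg n p = d)"

lemma homog_finsupp: "homog j d c \<Longrightarrow> finsupp c" by (simp add: homog_def)
lemma homog_from_i: "homog j d c \<Longrightarrow> from_i c" by (simp add: homog_def from_i_def)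

lemma homog_linext:
  assumes "homog j d c" "\<And>p. finsupp (f p)"
    "\<And>p q. valid_from m i p \<Longrightarrow> target i p = j \<Longrightarrow> pdeg n p = d \<Longrightarrow> f p q \<noteq> 0 \<Longrightarrow> valid_from m i q \<and> target i q = j \<and> pdeg n q = d'"
  shows "homog j d' (linext f c)"
proof -
  have f: "finsupp (linext f c)" using assms(1,2) by (simp add: homog_def finsupp_linext)
  have "valid_from m i q \<and> target i q = j \<and> pdeg n q = d'" if "linext f c q \<noteq> 0" for q
  proof -
    have "q \<in> supp (linext f c)" using that by (simp add: supp_def)
    then have "q \<in> (\<Union>p\<in>supp c. supp (f p))" using supp_linext by blast
    then obtain p where p: "c p \<noteq> 0" "f p q \<noteq> 0" by (auto simp: supp_def)
    have "valid_from m i p" "target i p = j" "pdeg n p = d" using assms(1) p(1) by (auto simp: homog_def)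
    then show "valid_from m i q \<and> target i q = j \<and> pdeg n q = d'" using assms(3) p(2) by blast
  qed
  then show ?thesis using f by (simp add: homog_def)
qed

lemma homog_htpy: "homog j d c \<Longrightarrow> homog j (d + 1) (linext htpy c)"
  by (rule homog_linext) (auto dest: valid_from_htpy)

lemma homog_wrap: "homog j d (c :: path \<Rightarrow> 'k::comm_ring_1) \<Longrightarrow> homog j (d + (int n - 2)) (wrap c)"
  unfolding wrap_def
proof (rule homog_linext)
  fix p q assume a: "valid_from m i p" "target i p = j" "pdeg n p = d" "(wrap_path p q :: 'k) \<noteq> 0"
  have "(retract_path ((i,nxt) # (nxt,i) # p) q :: 'k) = wrap_path p q" by (simp add: retract_path_def)
  then have "(retract_path ((i,nxt) # (nxt,i) # p) q :: 'k) \<noteq> 0" using a(4) by simp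
  moreover have "valid_from m i ((i,nxt) # (nxt,i) # p)" using a(1) i_ge_1 i_le_m nxt_ge_1 nxt_le_m nxt_neq by simp
  ultimately show "valid_from m i q \<and> target i q = j \<and> pdeg n q = d + (int n - 2)"
    using valid_from_retract_path[of "(i,nxt) # (nxt,i) # p" q] a gdeg_i_nxt_loop by auto
qed auto

lemma homog_unwrap: "homog j d c \<Longrightarrow> homog j (d - (int n - 2)) (unwrap c)"
  unfolding homog_def using finsupp_unwrap gdeg_i_nxt_loop by (auto simp: unwrap_def)

lemma homog_add: "homog j d a \<Longrightarrow> homog j d b \<Longrightarrow> homog j d (\<lambda>q. a q + b q)"
  unfolding homog_def by (auto intro: finsupp_add) (metis add.right_neutral)+

lemma homog_zero: "homog j d (\<lambda>q. 0)" by (simp add: homog_def)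

lemma homog_wrap_iter: "homog j d y \<Longrightarrow> homog j (d + int k * (int n - 2)) ((wrap ^^ k) y)"
proof (induction k)
  case 0 then show ?case by simp
next
  case (Suc k)
  then show ?case using homog_wrap[OF Suc.IH[OF Suc.prems]] by (simp add: algebra_simps)
qed

lemma bd_wrap_iter: "homog j d y \<Longrightarrow> bd y = (\<lambda>q. 0) \<Longrightarrow> bd ((wrap ^^ k) y) = (\<lambda>q. 0 :: 'k::comm_ring_1)"
proof (induction k)
  case 0 then show ?case by simp
next
  case (Suc k)
  have "homog j (d + int k * (int n - 2)) ((wrap ^^ k) y)" by (rule homog_wrap_iter[OF Suc.prems(1)])
  then show ?case using Suc by (simp add: bd_wrap homog_finsupp homog_from_i)
qed

lemma finsupp_wrap_iter: "finsupp y \<Longrightarrow> finsupp ((wrap ^^ k) y)"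
  by (induction k) (simp_all add: finsupp_wrap)

lemma chains_iff_homog: "(c \<in> chains n m i j d) = homog j d c"
  unfolding chains_def homog_def finsupp_def supp_def by (auto simp: is_path_iff_valid_from)

lemma cycles_iff_homog: "(c \<in> cycles n m i j d) = (homog j d c \<and> bd c = (\<lambda>q. 0))"
  unfolding cycles_def by (auto simp: chains_iff_homog dch_eq_linext fun_eq_iff)

lemma boundaries_iff_homog: "(x \<in> boundaries n m i j d) = (\<exists>b. homog j (d+1) b \<and> x = bd b)"
  unfolding boundaries_def by (auto simp: chains_iff_homog dch_eq_linext)

lemma cycle_decomp:
  assumes C: "homog j d c" and Z: "bd c = (\<lambda>q. 0 :: 'k::comm_ring_1)"
  shows "c = (\<lambda>q. bd (linext htpy c) q + retract c q)"
proof -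
  have "retract c = (\<lambda>q. c q - (bd (linext htpy c) q + linext htpy (bd c) q))"
    by (rule htpy_identity[OF homog_finsupp[OF C] homog_from_i[OF C]])
  then have "retract c = (\<lambda>q. c q - bd (linext htpy c) q)" using Z by simp
  then show ?thesis by (simp add: fun_eq_iff)
qed

lemma n_minus_2_pos: "int n - 2 > 0"
  using n_ge_3 by simp

text \<open>The homology classes from \<open>z\<^sub>i\<close> are generated by \<open>W\<^sup>k\<close> applied to the identity of \<open>z\<^sub>i\<close>
  (in degree \<open>0\<close>) or to \<open>b\<^sub>i\<^sub>,\<^sub>i\<^sub>'\<close> (in degree \<open>base_deg i'\<close>).\<close>
definition base_deg :: "nat \<Rightarrow> int" where
  "base_deg j = (if j = i then 0 else gdeg n (i, nxt))"

definition base :: "nat \<Rightarrow> path \<Rightarrow> 'k::comm_ring_1" where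
  "base j = (if j = i then unit_chain [] else unit_chain [(i, nxt)])"

definition generator_degree :: "nat \<Rightarrow> int \<Rightarrow> bool" where
  "generator_degree j d \<longleftrightarrow> j \<in> {i, nxt} \<and> (\<exists>k::nat. d - base_deg j = int k * (int n - 2))"

definition gen_cycle :: "nat \<Rightarrow> int \<Rightarrow> path \<Rightarrow> 'k::comm_ring_1" where
  "gen_cycle j d = (if generator_degree j d
     then (wrap ^^ nat ((d - base_deg j) div (int n - 2))) (base j) else (\<lambda>q. 0))"

lemma homog_base:
  assumes "j \<in> {i, nxt}"
  shows "homog j (base_deg j) (base j)"
proof -
  have "finsupp (base j)" by (simp add: base_def)
  then show ?thesis
    using assms i_ge_1 i_le_m nxt_ge_1 nxt_le_m nxt_neq
    by (auto simp: homog_def base_def base_deg_def unit_chain_def)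
qed

lemma bd_base: "bd (base j) = (\<lambda>q. 0)"
  by (simp add: base_def dpath_edge)

lemma homog_gen_cycle: "homog j d (gen_cycle j d)"
proof (cases "generator_degree j d")
  case True
  then obtain k :: nat where j: "j \<in> {i, nxt}" and k: "d - base_deg j = int k * (int n - 2)"
    by (auto simp: generator_degree_def)
  then have "nat ((d - base_deg j) div (int n - 2)) = k" using n_minus_2_pos by simp
  moreover have "d = base_deg j + int k * (int n - 2)" using k by simp
  ultimately show ?thesis
    using True homog_wrap_iter[OF homog_base[OF j], of k] by (simp add: gen_cycle_def)
qed (simp add: gen_cycle_def homog_zero)

lemma bd_gen_cycle: "bd (gen_cycle j d) = (\<lambda>q. 0 :: 'k::comm_ring_1)"
  by (auto simp: gen_cycle_def generator_degree_def intro: bd_wrap_iter[OF homog_base bd_base])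

lemma gen_cycle_base_deg: "j \<in> {i, nxt} \<Longrightarrow> gen_cycle j (base_deg j) = base j"
  by (auto simp: gen_cycle_def generator_degree_def)

lemma gen_cycle_below_base: "gen_cycle j (base_deg j - (int n - 2)) = (\<lambda>q. 0)"
proof -
  have "- (int n - 2) \<noteq> int k * (int n - 2)" for k :: nat
    using n_minus_2_pos by (smt (verit) mult_nonneg_nonneg of_nat_0_le_iff)
  then show ?thesis by (simp add: gen_cycle_def generator_degree_def)
qed

lemma gen_cycle_step:
  assumes "j \<notin> {i, nxt} \<or> d \<noteq> base_deg j"
  shows "gen_cycle j d = wrap (gen_cycle j (d - (int n - 2)) :: path \<Rightarrow> 'k::comm_ring_1)"
proof (cases "j \<in> {i, nxt}")
  case j: True
  let ?x = "d - base_deg j" and ?N = "int n - 2"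
  have x: "?x \<noteq> 0" using assms j by auto
  have shift: "d - ?N - base_deg j = ?x - ?N" by simp
  have deg: "generator_degree j d \<longleftrightarrow> generator_degree j (d - ?N)"
    unfolding generator_degree_def shift using nat_multiple_step[OF n_minus_2_pos x] by simp
  show ?thesis
  proof (cases "generator_degree j (d - ?N)")
    case True
    then obtain k :: nat where "?x - ?N = int k * ?N" unfolding generator_degree_def shift by blast
    then have "nat (?x div ?N) = Suc (nat ((?x - ?N) div ?N))"
      by (rule nat_div_multiple_step[OF n_minus_2_pos])
    then show ?thesis using True deg by (simp add: gen_cycle_def shift)
  qed (use deg in \<open>simp add: gen_cycle_def\<close>)
qed (simp add: gen_cycle_def generator_degree_def)

lemma low_part_homog:
  assumes "homog j d c"
  shows "low_part c = (if j \<in> {i, nxt} \<and> d = base_deg j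
     then (\<lambda>q. c (if j = i then [] else [(i, nxt)]) * base j q) else (\<lambda>q. 0))"
proof -
  have "c [] = 0 \<or> j = i \<and> d = 0" and "c [(i,nxt)] = 0 \<or> j = nxt \<and> d = gdeg n (i, nxt)"
    using assms by (auto simp: homog_def)
  then show ?thesis
    using nxt_neq by (auto simp: low_part_def base_def base_deg_def unit_chain_def fun_eq_iff)
qed

lemma low_part_add_wrap:
  assumes "homog j d c"
  shows "\<exists>a'. (\<lambda>q. low_part c q + a * wrap (gen_cycle j (d - (int n - 2))) q) = (\<lambda>q. a' * gen_cycle j d q)"
proof (cases "j \<in> {i, nxt} \<and> d = base_deg j")
  case True
  let ?e = "if j = i then [] else [(i, nxt)]"
  have g: "gen_cycle j d = base j" using True gen_cycle_base_deg by auto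
  have g': "gen_cycle j (d - (int n - 2)) = (\<lambda>q. 0)" using True gen_cycle_below_base by auto
  have low: "low_part c = (\<lambda>q. c ?e * base j q)" using True low_part_homog[OF assms] by simp
  show ?thesis unfolding low g g' wrap_zero by (intro exI[of _ "c ?e"]) simp
next
  case False
  then have low: "low_part c = (\<lambda>q. 0)" and step: "gen_cycle j d = wrap (gen_cycle j (d - (int n - 2)))"
    using low_part_homog[OF assms] gen_cycle_step[of j d] by auto
  show ?thesis unfolding low step by (intro exI[of _ a]) simp
qed

text \<open>Induction on path length: \<open>c = d(hc) + low_part c + W (unwrap c)\<close>, and \<open>unwrap c\<close> is a
  shorter cycle.\<close>
lemma cycle_classify:
  assumes "homog j d c" "bd c = (\<lambda>q. 0)" "\<forall>p. c p \<noteq> 0 \<longrightarrow> length p < N"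
  shows "\<exists>a b. homog j (d + 1) b \<and> c = (\<lambda>q. a * gen_cycle j d q + bd b q)"
  using assms
proof (induction N arbitrary: c d)
  case 0
  then have "c = (\<lambda>q. 0)" by auto
  then show ?case using homog_zero by (intro exI[where x=0] exI[where x="\<lambda>q. 0"]) auto
next
  case (Suc N)
  have fc: "finsupp c" and vc: "from_i c" using Suc.prems(1) by (simp_all add: homog_finsupp homog_from_i)
  have "homog j (d - (int n - 2)) (unwrap c)" by (rule homog_unwrap[OF Suc.prems(1)])
  moreover have "bd (unwrap c) = (\<lambda>q. 0)" using unwrap_bd[OF fc vc] Suc.prems(2) by (simp add: unwrap_def)
  moreover have "\<forall>r. unwrap c r \<noteq> 0 \<longrightarrow> length r < N" using Suc.prems(3) by (auto simp: unwrap_def)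
  ultimately obtain a b' where b': "homog j (d - (int n - 2) + 1) b'"
    and unwrap_c: "unwrap c = (\<lambda>q. a * gen_cycle j (d - (int n - 2)) q + bd b' q)"
    using Suc.IH by blast
  have fb': "finsupp b'" and vb': "from_i b'" using b' by (simp_all add: homog_finsupp homog_from_i)
  have wrap_unwrap_c: "wrap (unwrap c) = (\<lambda>q. a * wrap (gen_cycle j (d - (int n - 2))) q + bd (wrap b') q)"
    unfolding unwrap_c
    by (simp add: wrap_add finsupp_smult homog_finsupp[OF homog_gen_cycle] finsupp_bd fb'
        wrap_smult bd_wrap[OF fb' vb'])
  define b where "b = (\<lambda>q. linext htpy c q + wrap b' q)"
  have "homog j (d + 1) (wrap b')" using homog_wrap[OF b'] by (simp add: algebra_simps)
  then have hb: "homog j (d + 1) b" unfolding b_def by (intro homog_add homog_htpy Suc.prems(1))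
  have bd_b: "bd b = (\<lambda>q. bd (linext htpy c) q + bd (wrap b') q)"
    unfolding b_def by (rule linext_add) (simp_all add: finsupp_linext_htpy fc finsupp_wrap fb')
  obtain a' where a': "(\<lambda>q. low_part c q + a * wrap (gen_cycle j (d - (int n - 2))) q)
      = (\<lambda>q. a' * gen_cycle j d q)" using low_part_add_wrap[OF Suc.prems(1)] by blast
  have "c = (\<lambda>q. bd (linext htpy c) q + retract c q)" by (rule cycle_decomp[OF Suc.prems(1,2)])
  also have "\<dots> = (\<lambda>q. (low_part c q + a * wrap (gen_cycle j (d - (int n - 2))) q) + bd b q)"
    unfolding retract_def wrap_unwrap_c bd_b by (simp add: fun_eq_iff algebra_simps)
  also have "\<dots> = (\<lambda>q. a' * gen_cycle j d q + bd b q)"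
    using a' by (simp add: fun_eq_iff)
  finally show ?case using hb by blast
qed

text \<open>Unwrapping reduces to \<open>k = 0\<close>, where it holds because \<open>d\<close> vanishes on the identity and
  raises path length, so that no boundary involves a path of length less than two.\<close>
lemma wrap_iter_not_boundary:
  assumes e: "length e < 2"
  shows "finsupp b \<Longrightarrow> from_i b \<Longrightarrow> (\<lambda>q. a * (wrap ^^ k) (unit_chain e) q) = bd b \<Longrightarrow> a = (0::'k::comm_ring_1)"
proof (induction k arbitrary: b)
  case 0
  have "bd b e = 0"
  proof -
    have "b p * dpath n m p e = 0" for p
    proof (cases "(dpath n m p e :: 'k) = 0")
      case False
      then have "length e = Suc (length p)" by (rule length_dpath)
      then have "p = []" using e by simp
      then show ?thesis by simp
    qed simp
    then show ?thesis by (simp add: linext_def)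
  qed
  moreover have "a * unit_chain e e = bd b e" using fun_cong[OF "0.prems"(3), of e] by simp
  ultimately show ?case by (simp add: unit_chain_def)
next
  case (Suc k)
  let ?X = "(wrap ^^ k) (unit_chain e) :: path \<Rightarrow> 'k"
  have fX: "finsupp ?X" by (simp add: finsupp_wrap_iter)
  have "unwrap (\<lambda>q. a * wrap ?X q) = unwrap (bd b)" using Suc.prems(3) by simp
  then have "(\<lambda>q. a * ?X q) = bd (unwrap b)"
    using unwrap_wrap[OF fX] unwrap_bd[OF Suc.prems(1,2)] by (simp add: unwrap_def fun_eq_iff)
  then show ?case using Suc.IH[of "unwrap b"] finsupp_unwrap[OF Suc.prems(1)] from_i_unwrap[OF Suc.prems(2)] by blast
qed

lemma gen_cycle_not_boundary:
  assumes "generator_degree j d" "homog j (d + 1) b" "(\<lambda>q. a * gen_cycle j d q) = bd b"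
  shows "a = (0 :: 'k::comm_ring_1)"
proof -
  define e :: path where "e = (if j = i then [] else [(i, nxt)])"
  have e: "length e < 2" "base j = unit_chain e" by (simp_all add: e_def base_def)
  have "(\<lambda>q. a * (wrap ^^ nat ((d - base_deg j) div (int n - 2))) (unit_chain e) q) = bd b"
    using assms(1,3) unfolding gen_cycle_def e(2) by simp
  then show ?thesis
    by (rule wrap_iter_not_boundary[OF e(1) homog_finsupp[OF assms(2)] homog_from_i[OF assms(2)]])
qed

lemma homology_iso_gen:
  "homology_iso n m i j d (if generator_degree j d then UNIV else ({0} :: 'k::comm_ring_1 set))"
proof -
  have gen: "\<exists>a. (\<lambda>q. c q - a * gen_cycle j d q) \<in> boundaries n m i j d"
    if "c \<in> cycles n m i j d" for c :: "path \<Rightarrow> 'k"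
  proof -
    have c: "homog j d c" "bd c = (\<lambda>q. 0)" using that by (simp_all add: cycles_iff_homog)
    obtain N where "\<forall>p. c p \<noteq> 0 \<longrightarrow> length p < N"
      using finsupp_length_bound homog_finsupp[OF c(1)] by blast
    then obtain a b where b: "homog j (d + 1) b" "c = (\<lambda>q. a * gen_cycle j d q + bd b q)"
      using cycle_classify[OF c] by blast
    then have "(\<lambda>q. c q - a * gen_cycle j d q) = bd b" by (simp add: fun_eq_iff)
    then show ?thesis using b(1) by (auto simp: boundaries_iff_homog)
  qed
  show ?thesis
  proof (cases "generator_degree j d")
    case True
    have z: "gen_cycle j d \<in> cycles n m i j d"
      by (simp add: cycles_iff_homog homog_gen_cycle bd_gen_cycle)
    have free: "a = 0" if "(\<lambda>q. a * gen_cycle j d q) \<in> boundaries n m i j d" for a :: 'k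
      using that True gen_cycle_not_boundary by (auto simp: boundaries_iff_homog)
    show ?thesis using homology_iso_UNIV[OF z gen free] True by simp
  next
    case False
    then have "gen_cycle j d = (\<lambda>q. 0 :: 'k)" by (simp add: gen_cycle_def)
    then have "homology_iso n m i j d ({0} :: 'k set)"
      using gen by (intro homology_iso_zero) simp
    then show ?thesis using False by simp
  qed
qed

lemma generator_degree_polyk:
  "(if generator_degree j d then UNIV else {0}) =
     (if j = i then (polyk (int n - 2) d :: 'k::comm_ring_1 set)
      else if j = i + 1 \<and> 1 \<le> i \<and> i \<le> m - 1 then polyk (int n - 2) d
      else if i = m \<and> j = 1 then polyk (int n - 2) (d - (int n - int m))
      else {0})"
proof (cases "j = i")
  case True
  then show ?thesis by (simp add: generator_degree_def polyk_def base_deg_def)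
next
  case j_i: False
  have nxt_iff: "j = nxt \<longleftrightarrow> (j = i + 1 \<and> 1 \<le> i \<and> i \<le> m - 1) \<or> (i = m \<and> j = 1)"
    using i_ge_1 i_le_m m_ge_3 by (auto simp: nxt_def)
  show ?thesis
  proof (cases "j = nxt")
    case True
    have "base_deg j = (if i < m then 0 else int n - int m)"
      using True nxt_neq i_ge_1 i_le_m m_ge_3 by (auto simp: base_deg_def nxt_def gdeg_def)
    then show ?thesis
      using True j_i nxt_iff i_le_m m_ge_3 by (auto simp: generator_degree_def polyk_def)
  next
    case False
    then have "\<not> (j = i + 1 \<and> 1 \<le> i \<and> i \<le> m - 1)" "\<not> (i = m \<and> j = 1)"
      using nxt_iff by blast+
    then show ?thesis using False j_i by (auto simp: generator_degree_def)
  qed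
qed

end

theorem mainTheorem2:
  fixes n m i j :: nat and d :: int
  assumes "n \<ge> 3" and "m \<ge> 3"
    and "1 \<le> i" and "i \<le> m" and "1 \<le> j" and "j \<le> m"
  shows "homology_iso n m i j d
           (if j = i then (polyk (int n - 2) d :: 'k::comm_ring_1 set)
            else if j = i + 1 \<and> 1 \<le> i \<and> i \<le> m - 1 then polyk (int n - 2) d
            else if i = m \<and> j = 1 then polyk (int n - 2) (d - (int n - int m))
            else {0})"
proof -
  interpret source_vertex n m i using assms by unfold_locales
  show ?thesis using homology_iso_gen[of j d] by (simp only: generator_degree_polyk)
qed

end
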